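(* There is a function $f$ such that, for every graph $H$ and every positive integer $t$, one of the following holds: (i) $K_t$ is a projection of $H$; (ii) $K_{t,t,t}$ is a projection of $H$; (iii) an extended biclique can be obtained from $H$ by deleting at most $f(t)$ vertices.
   Context: A graph $H'$ is a projection of $H$ if $H'$ can be obtained from $H$ by a sequence of vertex deletions and identifications of two nonadjacent vertices. $K_{t,t,t}$ is the complete tripartite graph with three parts of size $t$. An extended biclique is a complete bipartite graph together with a set of isolated vertices. *)

theory Defs
  imports Main
begin

type_synonym 'a graph = "'a set \<times> 'a set set"

definition verts :: "'a graph \<Rightarrow> 'a set" where "verts G = fst G"
definition edges :: "'a graph \<Rightarrow> 'a set set" where "edges G = snd G"

definition wf_graph :: "'a graph \<Rightarrow> bool" where
  "wf_graph G \<longleftrightarrow> finite (verts G) \<and>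
     (\<forall>e\<in>edges G. \<exists>x y. x \<noteq> y \<and> x \<in> verts G \<and> y \<in> verts G \<and> e = {x, y})"

definition delete_vertex :: "'a graph \<Rightarrow> 'a \<Rightarrow> 'a graph" where
  "delete_vertex G v = (verts G - {v}, {e \<in> edges G. v \<notin> e})"

definition identify :: "'a graph \<Rightarrow> 'a \<Rightarrow> 'a \<Rightarrow> 'a graph" where
  "identify G u v = (verts G - {v},
     {e \<in> edges G. v \<notin> e} \<union> {{u, w} | w. {v, w} \<in> edges G})"

inductive proj_reach :: "'a graph \<Rightarrow> 'a graph \<Rightarrow> bool" for H where
  refl: "proj_reach H H"
| del: "proj_reach H G \<Longrightarrow> v \<in> verts G \<Longrightarrow> proj_reach H (delete_vertex G v)"
| ident: "proj_reach H G \<Longrightarrow> u \<in> verts G \<Longrightarrow> v \<in> verts G \<Longrightarrow> u \<noteq> v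
           \<Longrightarrow> {u, v} \<notin> edges G \<Longrightarrow> proj_reach H (identify G u v)"

definition graph_iso :: "'a graph \<Rightarrow> 'b graph \<Rightarrow> bool" where
  "graph_iso G G' \<longleftrightarrow> (\<exists>f. bij_betw f (verts G) (verts G') \<and>
     (\<forall>x\<in>verts G. \<forall>y\<in>verts G. {x, y} \<in> edges G \<longleftrightarrow> {f x, f y} \<in> edges G'))"

definition is_projection :: "'b graph \<Rightarrow> 'a graph \<Rightarrow> bool" where
  "is_projection H' H \<longleftrightarrow> (\<exists>G. proj_reach H G \<and> graph_iso G H')"

definition complete_graph :: "nat \<Rightarrow> nat graph" where
  "complete_graph t = ({0..<t}, {{x, y} | x y. x < t \<and> y < t \<and> x \<noteq> y})"

definition complete_tripartite :: "nat \<Rightarrow> (nat \<times> nat) graph" where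
  "complete_tripartite t = ({0..<3} \<times> {0..<t},
     {{x, y} | x y. x \<in> {0..<3} \<times> {0..<t} \<and> y \<in> {0..<3} \<times> {0..<t} \<and> fst x \<noteq> fst y})"

definition extended_biclique :: "'a graph \<Rightarrow> bool" where
  "extended_biclique G \<longleftrightarrow> (\<exists>A B I. A \<inter> B = {} \<and> A \<inter> I = {} \<and> B \<inter> I = {} \<and>
     verts G = A \<union> B \<union> I \<and> edges G = {{a, b} | a b. a \<in> A \<and> b \<in> B})"

definition delete_set :: "'a graph \<Rightarrow> 'a set \<Rightarrow> 'a graph" where
  "delete_set G X = (verts G - X, {e \<in> edges G. e \<inter> X = {}})"

end

theory Submission
  imports Defs "HOL-Library.Ramsey" "HOL-Library.Infinite_Set"
begin

text \<open>
  Call two vertices twins if they have the same neighbourhood. If a set of vertices is partitioned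
  into independent classes, identifying each class to a single vertex is a sequence of legal
  identifications; so the graph of adjacencies between the classes is a projection of \<open>H\<close>.

  Suppose \<open>K\<^sub>t\<close> is not a projection of \<open>H\<close>. By Ramsey's theorem, many vertices with distinct
  neighbourhoods would contain a \<open>t\<close>-clique or a long independent sequence whose neighbourhoods
  form a strict chain or an antichain. A chain \<open>N(u\<^sub>0) \<subset> \<dots> \<subset> N(u\<^sub>t)\<close> yields \<open>K\<^sub>t\<close> from the
  classes \<open>{u\<^sub>i, y\<^sub>i}\<close> with \<open>y\<^sub>i \<in> N(u\<^sub>i\<^sub>+\<^sub>1) - N(u\<^sub>i)\<close>; for an antichain, Ramsey's theorem
  for triples makes the witnesses of non-inclusion behave uniformly, which yields either such
  classes again or a large induced matching, and a matching on \<open>t\<^sup>2\<close> edges gives \<open>K\<^sub>t\<close>. Hence \<open>H\<close>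
  has fewer than \<open>G(t)\<close> twin classes.

  Delete the vertices whose twin class has fewer than \<open>2t\<close> elements, at most \<open>2t G(t)\<close> of them.
  Every remaining vertex can be blown up into \<open>2t\<close> twins, so an induced triangle, \<open>P\<^sub>4\<close> or
  \<open>2K\<^sub>2\<close> among them would make \<open>K\<^sub>t\<^sub>,\<^sub>t\<^sub>,\<^sub>t\<close> a projection; and a graph without these induced
  subgraphs is an extended biclique.
\<close>

definition adj :: "'a graph \<Rightarrow> 'a \<Rightarrow> 'a \<Rightarrow> bool" where
  "adj H x y \<longleftrightarrow> {x, y} \<in> edges H"

definition nbhd :: "'a graph \<Rightarrow> 'a \<Rightarrow> 'a set" where
  "nbhd H x = {y. adj H x y}"

definition twins :: "'a graph \<Rightarrow> 'a \<Rightarrow> 'a set" where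
  "twins H x = {y \<in> verts H. nbhd H y = nbhd H x}"

lemma adj_commute: "adj H x y \<longleftrightarrow> adj H y x"
  by (simp add: adj_def insert_commute)

lemma adj_irrefl: "wf_graph H \<Longrightarrow> \<not> adj H x x"
  unfolding adj_def wf_graph_def by (metis doubleton_eq_iff insert_absorb2)

lemma adj_in_verts:
  assumes "wf_graph H" "adj H x y"
  shows "x \<in> verts H" "y \<in> verts H"
  using assms unfolding adj_def wf_graph_def by (metis doubleton_eq_iff)+

lemma edgesE:
  assumes "wf_graph H" "e \<in> edges H"
  obtains x y where "e = {x, y}" "adj H x y"
  using assms unfolding adj_def wf_graph_def by metis

lemma nbhd_neqI: "adj H x z \<Longrightarrow> \<not> adj H x' z \<Longrightarrow> nbhd H x \<noteq> nbhd H x'"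
  by (auto simp: nbhd_def)

lemma adj_twins:
  assumes "y \<in> twins H x" "y' \<in> twins H x'"
  shows "adj H y y' \<longleftrightarrow> adj H x x'"
proof -
  have "nbhd H y = nbhd H x" "nbhd H y' = nbhd H x'"
    using assms by (auto simp: twins_def)
  then have "adj H y y' \<longleftrightarrow> adj H x y'" "adj H y' x \<longleftrightarrow> adj H x' x"
    by (auto simp: nbhd_def set_eq_iff)
  then show ?thesis by (simp add: adj_commute)
qed

lemma wf_graph_delete_set:
  assumes "wf_graph H"
  shows "wf_graph (delete_set H X)"
  unfolding wf_graph_def
proof (intro conjI ballI)
  show "finite (verts (delete_set H X))"
    using assms by (simp add: wf_graph_def delete_set_def verts_def)
  fix e assume "e \<in> edges (delete_set H X)"
  then have e: "e \<in> edges H" "e \<inter> X = {}" by (simp_all add: delete_set_def edges_def)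
  have "\<exists>x y. x \<noteq> y \<and> x \<in> verts H \<and> y \<in> verts H \<and> e = {x, y}"
    using assms e(1) by (simp add: wf_graph_def)
  then obtain x y where xy: "x \<noteq> y" "x \<in> verts H" "y \<in> verts H" "e = {x, y}"
    by blast
  then have "x \<in> verts (delete_set H X)" "y \<in> verts (delete_set H X)"
    using e(2) by (auto simp: delete_set_def verts_def)
  with xy show "\<exists>x y. x \<noteq> y \<and> x \<in> verts (delete_set H X) \<and> y \<in> verts (delete_set H X) \<and> e = {x, y}"
    by blast
qed

lemma adj_delete_set: "adj (delete_set H X) x y \<longleftrightarrow> adj H x y \<and> x \<notin> X \<and> y \<notin> X"
  by (auto simp: adj_def delete_set_def edges_def)

section \<open>Projections from quotients\<close>

definition quotient_graph :: "'a graph \<Rightarrow> 'a set \<Rightarrow> ('a \<Rightarrow> 'a) \<Rightarrow> 'a graph" where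
  "quotient_graph H W p = (p ` W, (\<lambda>(x, y). {p x, p y}) ` {(x, y) \<in> W \<times> W. adj H x y})"

definition independent_retraction :: "'a graph \<Rightarrow> 'a set \<Rightarrow> ('a \<Rightarrow> 'a) \<Rightarrow> bool" where
  "independent_retraction H W p \<longleftrightarrow>
     (\<forall>x\<in>W. p x \<in> W \<and> p (p x) = p x) \<and> (\<forall>x\<in>W. \<forall>y\<in>W. p x = p y \<longrightarrow> \<not> adj H x y)"

lemma quotient_graph_cong:
  "(\<And>x. x \<in> W \<Longrightarrow> p x = p' x) \<Longrightarrow> quotient_graph H W p = quotient_graph H W p'"
  unfolding quotient_graph_def by (auto intro!: image_cong)

lemma quotient_graph_comp:
  "quotient_graph H W (r \<circ> q) =
     (r ` verts (quotient_graph H W q), (\<lambda>e. r ` e) ` edges (quotient_graph H W q))"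
  unfolding quotient_graph_def verts_def edges_def by (simp add: image_comp case_prod_unfold comp_def)

lemma quotient_graph_edge_doubleton:
  assumes "independent_retraction H W p" "e \<in> edges (quotient_graph H W p)"
  shows "\<exists>a b. a \<noteq> b \<and> e = {a, b}"
proof -
  obtain x y where xy: "x \<in> W" "y \<in> W" "adj H x y" "e = {p x, p y}"
    using assms(2) by (auto simp: quotient_graph_def edges_def)
  then have "p x \<noteq> p y" using assms(1) by (auto simp: independent_retraction_def)
  with xy(4) show ?thesis by (intro exI[of _ "p x"] exI[of _ "p y"]) simp
qed

lemma proj_reach_delete_set:
  assumes "proj_reach H G" "finite D" "D \<subseteq> verts G"
  shows "proj_reach H (delete_set G D)"
  using assms(2,3)
proof (induction D rule: finite_induct)
  case empty
  have "delete_set G {} = G" by (simp add: delete_set_def verts_def edges_def)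
  then show ?case using assms(1) by simp
next
  case (insert v D)
  have "delete_set G (insert v D) = delete_vertex (delete_set G D) v"
    by (auto simp: delete_set_def delete_vertex_def verts_def edges_def)
  moreover have "v \<in> verts (delete_set G D)"
    using insert by (simp add: delete_set_def verts_def)
  moreover have "proj_reach H (delete_set G D)" using insert by simp
  ultimately show ?case by (metis proj_reach.del)
qed

lemma quotient_graph_id:
  assumes wf: "wf_graph H" and W: "W \<subseteq> verts H"
  shows "quotient_graph H W id = delete_set H (verts H - W)"
proof -
  have "(\<lambda>(x, y). {id x, id y}) ` {(x, y) \<in> W \<times> W. adj H x y} = {e \<in> edges H. e \<inter> (verts H - W) = {}}"
  proof (intro set_eqI iffI)
    fix e assume "e \<in> (\<lambda>(x, y). {id x, id y}) ` {(x, y) \<in> W \<times> W. adj H x y}"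
    then show "e \<in> {e \<in> edges H. e \<inter> (verts H - W) = {}}" by (auto simp: adj_def)
  next
    fix e assume e: "e \<in> {e \<in> edges H. e \<inter> (verts H - W) = {}}"
    obtain x y where xy: "e = {x, y}" "adj H x y"
      using e by (auto elim: edgesE[OF wf])
    have "x \<in> W" "y \<in> W"
      using xy e adj_in_verts[OF wf xy(2)] by auto
    with xy show "e \<in> (\<lambda>(x, y). {id x, id y}) ` {(x, y) \<in> W \<times> W. adj H x y}"
      by (auto intro: image_eqI[of _ _ "(x, y)"])
  qed
  moreover have "verts H - (verts H - W) = W" using W by blast
  ultimately show ?thesis by (simp add: quotient_graph_def delete_set_def verts_def edges_def)
qed

lemma identify_eq_image:
  assumes "u \<in> verts G" "u \<noteq> v"
    and loopless: "\<And>e. e \<in> edges G \<Longrightarrow> \<exists>a b. a \<noteq> b \<and> e = {a, b}"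
  defines "r \<equiv> \<lambda>z. if z = v then u else z"
  shows "identify G u v = (r ` verts G, (\<lambda>e. r ` e) ` edges G)"
proof -
  have "r ` verts G = verts G - {v}"
    using assms(1,2) by (auto simp: r_def)
  moreover have "(\<lambda>e. r ` e) ` edges G = {e \<in> edges G. v \<notin> e} \<union> {{u, w} | w. {v, w} \<in> edges G}"
  proof (intro set_eqI iffI)
    fix e' assume "e' \<in> (\<lambda>e. r ` e) ` edges G"
    then obtain a b where ab: "a \<noteq> b" "{a, b} \<in> edges G" "e' = {r a, r b}"
      using loopless by fastforce
    then show "e' \<in> {e \<in> edges G. v \<notin> e} \<union> {{u, w} | w. {v, w} \<in> edges G}"
      by (cases "a = v"; cases "b = v") (auto simp: r_def insert_commute)
  next
    fix e' assume "e' \<in> {e \<in> edges G. v \<notin> e} \<union> {{u, w} | w. {v, w} \<in> edges G}"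
    then show "e' \<in> (\<lambda>e. r ` e) ` edges G"
    proof
      assume e': "e' \<in> {e \<in> edges G. v \<notin> e}"
      then have "r ` e' = e'" by (force simp: r_def)
      with e' show ?thesis by (metis (mono_tags, lifting) image_eqI mem_Collect_eq)
    next
      assume "e' \<in> {{u, w} | w. {v, w} \<in> edges G}"
      then obtain w where w: "e' = {u, w}" "{v, w} \<in> edges G" by blast
      have "w \<noteq> v" using loopless[OF w(2)] by (metis doubleton_eq_iff)
      then have "r ` {v, w} = e'" using w by (simp add: r_def insert_commute)
      with w(2) show ?thesis by (metis image_eqI)
    qed
  qed
  ultimately show ?thesis by (simp add: identify_def)
qed

lemma independent_retraction_fun_upd:
  assumes wf: "wf_graph H" and p: "independent_retraction H W p" and v: "v \<in> W" "p v \<noteq> v"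
  defines "q \<equiv> p(v := v)"
  shows "independent_retraction H W q"
    and "{p v, v} \<notin> edges (quotient_graph H W q)"
    and "\<And>x. x \<in> W \<Longrightarrow> p x = (if q x = v then p v else q x)"
proof -
  have retr: "\<And>x. x \<in> W \<Longrightarrow> p x \<in> W \<and> p (p x) = p x"
    and indep: "\<And>x y. x \<in> W \<Longrightarrow> y \<in> W \<Longrightarrow> p x = p y \<Longrightarrow> \<not> adj H x y"
    using p by (auto simp: independent_retraction_def)
  have q_eq_v: "q x = v \<longleftrightarrow> x = v" if "x \<in> W" for x
    using retr[OF that] v by (auto simp: q_def)
  have "q x \<in> W \<and> q (q x) = q x" if "x \<in> W" for x
    using that retr v q_eq_v by (auto simp: q_def)
  moreover have "\<not> adj H x y" if xy: "x \<in> W" "y \<in> W" "q x = q y" for x y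
  proof (cases "x = v \<or> y = v")
    case True
    then have "x = y" using xy q_eq_v by metis
    then show ?thesis using adj_irrefl[OF wf] by simp
  next
    case False
    then show ?thesis using xy indep by (simp add: q_def)
  qed
  ultimately show "independent_retraction H W q"
    unfolding independent_retraction_def by blast
  show "{p v, v} \<notin> edges (quotient_graph H W q)"
  proof
    assume "{p v, v} \<in> edges (quotient_graph H W q)"
    then obtain x y where xy: "x \<in> W" "y \<in> W" "adj H x y" "{p v, v} = {q x, q y}"
      by (auto simp: quotient_graph_def edges_def)
    then consider "p v = q x" "v = q y" | "p v = q y" "v = q x"
      by (auto simp: doubleton_eq_iff)
    then have "p x = p y"
    proof cases
      case 1
      have "y = v" using q_eq_v[OF xy(2)] 1(2) by simp
      have "x \<noteq> v" using 1(1) v(2) by (auto simp: q_def)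
      with \<open>y = v\<close> 1(1) show ?thesis by (simp add: q_def)
    next
      case 2
      have "x = v" using q_eq_v[OF xy(1)] 2(2) by simp
      have "y \<noteq> v" using 2(1) v(2) by (auto simp: q_def)
      with \<open>x = v\<close> 2(1) show ?thesis by (simp add: q_def)
    qed
    with xy indep show False by blast
  qed
  show "p x = (if q x = v then p v else q x)" if "x \<in> W" for x
    using q_eq_v[OF that] by (auto simp: q_def)
qed

text \<open>Induction on the number of vertices moved by \<open>p\<close>: undoing \<open>p\<close> at a single vertex
  \<open>v\<close> leaves a retraction whose quotient becomes the quotient by \<open>p\<close> after identifying
  \<open>v\<close> into \<open>p v\<close>, and independence of the fibres makes this identification legal.\<close>

lemma proj_reach_quotient_graph:
  assumes wf: "wf_graph H" and W: "W \<subseteq> verts H" and p: "independent_retraction H W p"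
  shows "proj_reach H (quotient_graph H W p)"
  using p
proof (induction "card {x \<in> W. p x \<noteq> x}" arbitrary: p)
  case 0
  have "finite W" using W wf finite_subset by (auto simp: wf_graph_def)
  with 0 have "quotient_graph H W p = quotient_graph H W id"
    by (intro quotient_graph_cong) auto
  also have "\<dots> = delete_set H (verts H - W)"
    by (rule quotient_graph_id[OF wf W])
  finally show ?case
    using proj_reach_delete_set[OF proj_reach.refl, of "verts H - W" H] wf
    by (simp add: wf_graph_def)
next
  case (Suc n)
  have "finite W" using W wf finite_subset by (auto simp: wf_graph_def)
  have "{x \<in> W. p x \<noteq> x} \<noteq> {}" using Suc.hyps(2) by (intro notI) simp
  then obtain v where v: "v \<in> W" "p v \<noteq> v" by blast
  define q where "q = p(v := v)"
  define r where "r = (\<lambda>z. if z = v then p v else z)"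
  have q: "independent_retraction H W q" "{p v, v} \<notin> edges (quotient_graph H W q)"
    and p_eq: "\<And>x. x \<in> W \<Longrightarrow> p x = (r \<circ> q) x"
    using independent_retraction_fun_upd[OF wf Suc.prems v] by (simp_all add: q_def r_def)
  have "{x \<in> W. q x \<noteq> x} = {x \<in> W. p x \<noteq> x} - {v}" by (auto simp: q_def)
  then have IH: "proj_reach H (quotient_graph H W q)"
    using Suc.hyps \<open>finite W\<close> v q(1) by simp
  have "p v \<in> W" "q (p v) = p v" "q v = v"
    using Suc.prems v by (auto simp: independent_retraction_def q_def)
  then have pv: "p v \<in> verts (quotient_graph H W q)" "v \<in> verts (quotient_graph H W q)"
    using v(1) unfolding quotient_graph_def verts_def by (metis fst_conv image_eqI)+
  have "identify (quotient_graph H W q) (p v) v =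
      (r ` verts (quotient_graph H W q), (\<lambda>e. r ` e) ` edges (quotient_graph H W q))"
    unfolding r_def by (rule identify_eq_image[OF pv(1) v(2) quotient_graph_edge_doubleton[OF q(1)]])
  also have "\<dots> = quotient_graph H W (r \<circ> q)"
    by (rule quotient_graph_comp[symmetric])
  also have "\<dots> = quotient_graph H W p"
    using p_eq by (rule quotient_graph_cong[symmetric])
  finally show ?case
    using proj_reach.ident[OF IH pv v(2) q(2)] by simp
qed

section \<open>Projections along independent partitions\<close>

locale independent_partition =
  fixes H :: "'a graph" and J :: "'b set" and C :: "'b \<Rightarrow> 'a set"
  assumes wf: "wf_graph H"
    and part_subset: "j \<in> J \<Longrightarrow> C j \<subseteq> verts H"
    and part_nonempty: "j \<in> J \<Longrightarrow> C j \<noteq> {}"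
    and part_independent: "j \<in> J \<Longrightarrow> x \<in> C j \<Longrightarrow> y \<in> C j \<Longrightarrow> \<not> adj H x y"
    and parts_disjoint: "i \<in> J \<Longrightarrow> j \<in> J \<Longrightarrow> i \<noteq> j \<Longrightarrow> C i \<inter> C j = {}"
begin

definition rep :: "'b \<Rightarrow> 'a" where
  "rep j = (SOME x. x \<in> C j)"

definition part_of :: "'a \<Rightarrow> 'b" where
  "part_of x = (THE j. j \<in> J \<and> x \<in> C j)"

definition retract :: "'a \<Rightarrow> 'a" where
  "retract x = rep (part_of x)"

lemma rep_in_part: "j \<in> J \<Longrightarrow> rep j \<in> C j"
  using part_nonempty unfolding rep_def by (simp add: some_in_eq)

lemma part_of_eq: "j \<in> J \<Longrightarrow> x \<in> C j \<Longrightarrow> part_of x = j"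
  unfolding part_of_def using parts_disjoint by (intro the_equality) blast+

lemma part_of_rep: "j \<in> J \<Longrightarrow> part_of (rep j) = j"
  by (simp add: part_of_eq rep_in_part)

lemma rep_eq_iff:
  assumes "i \<in> J" "j \<in> J"
  shows "rep i = rep j \<longleftrightarrow> i = j"
proof
  assume "rep i = rep j"
  then have "part_of (rep i) = part_of (rep j)" by (rule arg_cong)
  then show "i = j" by (simp only: part_of_rep assms)
qed simp

lemma retract_eq: "j \<in> J \<Longrightarrow> x \<in> C j \<Longrightarrow> retract x = rep j"
  by (simp add: retract_def part_of_eq)

lemma independent_retraction_retract: "independent_retraction H (\<Union>(C ` J)) retract"
  unfolding independent_retraction_def
proof (intro conjI ballI impI)
  fix x assume "x \<in> \<Union>(C ` J)"
  then obtain j where j: "j \<in> J" "x \<in> C j" by blast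
  then have "retract x = rep j" by (rule retract_eq)
  moreover have "rep j \<in> \<Union>(C ` J)" using j(1) rep_in_part[OF j(1)] by (rule UN_I)
  ultimately show "retract x \<in> \<Union>(C ` J)" by simp
  show "retract (retract x) = retract x"
    using \<open>retract x = rep j\<close> retract_eq[OF j(1) rep_in_part[OF j(1)]] by simp
next
  fix x y assume "x \<in> \<Union>(C ` J)" "y \<in> \<Union>(C ` J)" and eq: "retract x = retract y"
  then obtain i j where ij: "i \<in> J" "x \<in> C i" "j \<in> J" "y \<in> C j" by blast
  with eq have "rep i = rep j" by (simp add: retract_eq)
  then have "i = j" using ij(1,3) by (simp add: rep_eq_iff)
  with ij show "\<not> adj H x y" using part_independent by blast
qed

lemma verts_quotient: "verts (quotient_graph H (\<Union>(C ` J)) retract) = rep ` J"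
  unfolding quotient_graph_def verts_def fst_conv
proof
  show "retract ` \<Union>(C ` J) \<subseteq> rep ` J" by (auto simp: retract_eq)
  show "rep ` J \<subseteq> retract ` \<Union>(C ` J)"
  proof
    fix z assume "z \<in> rep ` J"
    then obtain j where j: "j \<in> J" "z = rep j" by blast
    then have "z = retract (rep j)" "rep j \<in> \<Union>(C ` J)"
      using rep_in_part retract_eq by auto
    then show "z \<in> retract ` \<Union>(C ` J)" by (rule image_eqI)
  qed
qed

lemma edge_quotient_iff:
  assumes "i \<in> J" "j \<in> J"
  shows "{rep i, rep j} \<in> edges (quotient_graph H (\<Union>(C ` J)) retract) \<longleftrightarrow>
    i \<noteq> j \<and> (\<exists>x\<in>C i. \<exists>y\<in>C j. adj H x y)"
proof
  assume "{rep i, rep j} \<in> edges (quotient_graph H (\<Union>(C ` J)) retract)"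
  then obtain i' j' x y where xy: "i' \<in> J" "x \<in> C i'" "j' \<in> J" "y \<in> C j'" "adj H x y"
    and eq: "{rep i, rep j} = {rep i', rep j'}"
    by (auto simp: quotient_graph_def edges_def retract_eq)
  have "i' \<noteq> j'" using xy part_independent by blast
  from eq consider "rep i = rep i'" "rep j = rep j'" | "rep i = rep j'" "rep j = rep i'"
    by (auto simp: doubleton_eq_iff)
  then have "i = i' \<and> j = j' \<or> i = j' \<and> j = i'"
    using assms xy(1,3) by cases (simp_all add: rep_eq_iff)
  then show "i \<noteq> j \<and> (\<exists>x\<in>C i. \<exists>y\<in>C j. adj H x y)"
  proof (elim disjE conjE)
    assume "i = i'" "j = j'"
    with xy \<open>i' \<noteq> j'\<close> show ?thesis by auto
  next
    assume "i = j'" "j = i'"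
    with xy \<open>i' \<noteq> j'\<close> adj_commute[of H x y] show ?thesis by auto
  qed
next
  assume "i \<noteq> j \<and> (\<exists>x\<in>C i. \<exists>y\<in>C j. adj H x y)"
  then obtain x y where xy: "x \<in> C i" "y \<in> C j" "adj H x y" by blast
  then have "(x, y) \<in> {(x, y) \<in> \<Union>(C ` J) \<times> \<Union>(C ` J). adj H x y}" using assms by blast
  moreover have "{retract x, retract y} = {rep i, rep j}" using assms xy by (simp add: retract_eq)
  ultimately show "{rep i, rep j} \<in> edges (quotient_graph H (\<Union>(C ` J)) retract)"
    unfolding quotient_graph_def edges_def by (metis (no_types, lifting) case_prod_conv image_eqI snd_conv)
qed

lemma projection_of_part_graph:
  assumes verts_T: "verts T = J"
    and edges_T: "\<And>i j. i \<in> J \<Longrightarrow> j \<in> J \<Longrightarrow>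
      {i, j} \<in> edges T \<longleftrightarrow> i \<noteq> j \<and> (\<exists>x\<in>C i. \<exists>y\<in>C j. adj H x y)"
  shows "is_projection T H"
proof -
  let ?Q = "quotient_graph H (\<Union>(C ` J)) retract"
  have "proj_reach H ?Q"
    using part_subset by (intro proj_reach_quotient_graph[OF wf _ independent_retraction_retract]) blast
  moreover have "bij_betw part_of (verts ?Q) (verts T)"
  proof -
    have "inj_on part_of (rep ` J)" by (rule inj_onI) (auto simp: part_of_rep)
    moreover have "part_of ` rep ` J = J" by (force simp: part_of_rep image_iff)
    ultimately show ?thesis by (simp add: bij_betw_def verts_quotient verts_T)
  qed
  moreover have "{a, b} \<in> edges ?Q \<longleftrightarrow> {part_of a, part_of b} \<in> edges T"
    if "a \<in> verts ?Q" "b \<in> verts ?Q" for a b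
    using that by (auto simp: verts_quotient part_of_rep edge_quotient_iff edges_T)
  ultimately show ?thesis unfolding is_projection_def graph_iso_def by blast
qed

end

lemma complete_graph_projection_of_parts:
  assumes "independent_partition H {..<t} C"
    and cross: "\<And>i j. i < j \<Longrightarrow> j < t \<Longrightarrow> \<exists>x\<in>C i. \<exists>y\<in>C j. adj H x y"
  shows "is_projection (complete_graph t) H"
proof (rule independent_partition.projection_of_part_graph[OF assms(1)])
  show "verts (complete_graph t) = {..<t}" by (auto simp: complete_graph_def verts_def)
  fix i j assume ij: "i \<in> {..<t}" "j \<in> {..<t}"
  have "{i, j} \<in> edges (complete_graph t) \<longleftrightarrow> i \<noteq> j"
    using ij by (auto simp: complete_graph_def edges_def doubleton_eq_iff)
  moreover have "\<exists>x\<in>C i. \<exists>y\<in>C j. adj H x y" if "i \<noteq> j"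
  proof (cases "i < j")
    case True then show ?thesis using cross ij by simp
  next
    case False
    with that have "j < i" by simp
    then obtain x y where "x \<in> C j" "y \<in> C i" "adj H x y" using cross ij by blast
    then show ?thesis using adj_commute[of H x y] by blast
  qed
  ultimately show "{i, j} \<in> edges (complete_graph t) \<longleftrightarrow> i \<noteq> j \<and> (\<exists>x\<in>C i. \<exists>y\<in>C j. adj H x y)"
    by blast
qed

lemma complete_tripartite_projection_of_parts:
  assumes "independent_partition H ({..<3::nat} \<times> {..<t}) C"
    and same_side: "\<And>p q x y. p \<in> {..<3::nat} \<times> {..<t} \<Longrightarrow> q \<in> {..<3::nat} \<times> {..<t} \<Longrightarrow> fst p = fst q \<Longrightarrow>
      x \<in> C p \<Longrightarrow> y \<in> C q \<Longrightarrow> \<not> adj H x y"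
    and cross: "\<And>p q. p \<in> {..<3::nat} \<times> {..<t} \<Longrightarrow> q \<in> {..<3::nat} \<times> {..<t} \<Longrightarrow> fst p \<noteq> fst q \<Longrightarrow>
      \<exists>x\<in>C p. \<exists>y\<in>C q. adj H x y"
  shows "is_projection (complete_tripartite t) H"
proof (rule independent_partition.projection_of_part_graph[OF assms(1)])
  show "verts (complete_tripartite t) = {..<3::nat} \<times> {..<t}"
    by (simp add: complete_tripartite_def verts_def atLeast0LessThan)
  fix p q assume pq: "p \<in> {..<3::nat} \<times> {..<t}" "q \<in> {..<3::nat} \<times> {..<t}"
  have "{p, q} \<in> edges (complete_tripartite t) \<longleftrightarrow> fst p \<noteq> fst q"
  proof
    show "fst p \<noteq> fst q" if "{p, q} \<in> edges (complete_tripartite t)"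
      using that by (auto simp: complete_tripartite_def edges_def doubleton_eq_iff)
    show "{p, q} \<in> edges (complete_tripartite t)" if "fst p \<noteq> fst q"
    proof -
      have "{p, q} \<in> {{x, y} | x y. x \<in> {0..<3::nat} \<times> {0..<t} \<and> y \<in> {0..<3} \<times> {0..<t} \<and> fst x \<noteq> fst y}"
        using pq that by (intro CollectI exI[of _ p] exI[of _ q]) (simp add: atLeast0LessThan)
      then show ?thesis by (simp add: complete_tripartite_def edges_def)
    qed
  qed
  then show "{p, q} \<in> edges (complete_tripartite t) \<longleftrightarrow> p \<noteq> q \<and> (\<exists>x\<in>C p. \<exists>y\<in>C q. adj H x y)"
    using pq same_side cross by blast
qed

lemma complete_graph_projection_of_pairs:
  fixes x y :: "nat \<Rightarrow> 'a"
  assumes wf: "wf_graph H"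
    and verts: "\<And>i. i < t \<Longrightarrow> x i \<in> verts H \<and> y i \<in> verts H"
    and nonadj: "\<And>i. i < t \<Longrightarrow> \<not> adj H (x i) (y i)"
    and distinct: "\<And>i j. i < t \<Longrightarrow> j < t \<Longrightarrow> x i \<noteq> y j"
    and cross: "\<And>i j. i < j \<Longrightarrow> j < t \<Longrightarrow> adj H (x i) (y j) \<or> adj H (y i) (x j)"
  shows "is_projection (complete_graph t) H"
proof (rule complete_graph_projection_of_parts)
  have nonadj': "\<not> adj H (x i) (y i)" "\<not> adj H (y i) (x i)" if "i < t" for i
    using nonadj[OF that] adj_commute[of H "x i" "y i"] by simp_all
  have indep: "\<not> adj H a b" if "i < t" "a \<in> {x i, y i}" "b \<in> {x i, y i}" for i a b
    using that nonadj'[OF that(1)] adj_irrefl[OF wf] by auto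
  have "x i \<noteq> x j \<and> y i \<noteq> y j" if "i < j" "j < t" for i j
    using cross[OF that] nonadj'[of i] nonadj'[of j] that by auto
  then have "x i \<noteq> x j \<and> y i \<noteq> y j" if "i < t" "j < t" "i \<noteq> j" for i j
    using that by (metis linorder_neqE_nat)
  then have "{x i, y i} \<inter> {x j, y j} = {}" if "i < t" "j < t" "i \<noteq> j" for i j
    using that distinct by auto
  with verts indep show "independent_partition H {..<t} (\<lambda>i. {x i, y i})"
    by unfold_locales (auto simp: wf)
  show "\<exists>a\<in>{x i, y i}. \<exists>b\<in>{x j, y j}. adj H a b" if "i < j" "j < t" for i j
    using cross[OF that] by blast
qed

lemma complete_graph_projection_of_clique:
  assumes wf: "wf_graph H" and R: "R \<subseteq> verts H" "card R = t" "clique R (edges H)"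
  shows "is_projection (complete_graph t) H"
proof -
  have "finite R" using R(1) wf finite_subset by (auto simp: wf_graph_def)
  then obtain e where e: "bij_betw e {..<t} R"
    using ex_bij_betw_nat_finite R(2) by (metis atLeast0LessThan)
  have e_in: "e i \<in> R" if "i < t" for i
    using e that by (auto simp: bij_betw_def)
  have e_inj: "e i = e j \<longleftrightarrow> i = j" if "i < t" "j < t" for i j
    using e that by (auto simp: bij_betw_def inj_on_def)
  show ?thesis
  proof (rule complete_graph_projection_of_parts)
    show "independent_partition H {..<t} (\<lambda>i. {e i})"
      by unfold_locales (use wf R(1) e_in e_inj adj_irrefl[OF wf] in auto)
    show "\<exists>x\<in>{e i}. \<exists>y\<in>{e j}. adj H x y" if "i < j" "j < t" for i j
    proof -
      have "e i \<noteq> e j" using e_inj that by simp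
      with R(3) e_in that have "{e i, e j} \<in> edges H" unfolding clique_def by simp
      then show ?thesis by (simp add: adj_def)
    qed
  qed
qed

lemma induced_matching_inj:
  assumes p_indep: "\<And>k l. k \<in> I \<Longrightarrow> l \<in> I \<Longrightarrow> \<not> adj H (p k) (p l)"
    and matching: "\<And>k l. k \<in> I \<Longrightarrow> l \<in> I \<Longrightarrow> adj H (p k) (q l) \<longleftrightarrow> k = l"
  shows "inj_on p I" "inj_on q I" "p ` I \<inter> q ` I = {}"
proof -
  show "inj_on p I"
  proof (rule inj_onI)
    fix k l assume kl: "k \<in> I" "l \<in> I" "p k = p l"
    have "adj H (p k) (q k)" using matching[OF kl(1) kl(1)] by simp
    then have "adj H (p l) (q k)" using kl(3) by simp
    then show "k = l" using matching[OF kl(2) kl(1)] by simp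
  qed
  show "inj_on q I"
  proof (rule inj_onI)
    fix k l assume kl: "k \<in> I" "l \<in> I" "q k = q l"
    have "adj H (p k) (q k)" using matching[OF kl(1) kl(1)] by simp
    then have "adj H (p k) (q l)" using kl(3) by simp
    then show "k = l" using matching[OF kl(1) kl(2)] by simp
  qed
  have "p k \<noteq> q l" if "k \<in> I" "l \<in> I" for k l
  proof
    assume "p k = q l"
    moreover have "adj H (p l) (q l)" using matching[OF that(2) that(2)] by simp
    ultimately have "adj H (p l) (p k)" by simp
    with p_indep[OF that(2) that(1)] show False by contradiction
  qed
  then show "p ` I \<inter> q ` I = {}" by blast
qed

lemma complete_graph_projection_of_induced_matching:
  fixes p q :: "nat \<times> nat \<Rightarrow> 'a"
  assumes wf: "wf_graph H"
    and verts: "\<And>k. k \<in> {..<t} \<times> {..<t} \<Longrightarrow> p k \<in> verts H \<and> q k \<in> verts H"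
    and p_indep: "\<And>k l. k \<in> {..<t} \<times> {..<t} \<Longrightarrow> l \<in> {..<t} \<times> {..<t} \<Longrightarrow> \<not> adj H (p k) (p l)"
    and q_indep: "\<And>k l. k \<in> {..<t} \<times> {..<t} \<Longrightarrow> l \<in> {..<t} \<times> {..<t} \<Longrightarrow> \<not> adj H (q k) (q l)"
    and matching: "\<And>k l. k \<in> {..<t} \<times> {..<t} \<Longrightarrow> l \<in> {..<t} \<times> {..<t} \<Longrightarrow>
      adj H (p k) (q l) \<longleftrightarrow> k = l"
  shows "is_projection (complete_graph t) H"
proof -
  let ?I = "{..<t} \<times> {..<t}"
  have p_inj: "k = l" if "k \<in> ?I" "l \<in> ?I" "p k = p l" for k l
    using induced_matching_inj(1)[OF p_indep matching] that by (auto dest: inj_onD)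
  have q_inj: "k = l" if "k \<in> ?I" "l \<in> ?I" "q k = q l" for k l
    using induced_matching_inj(2)[OF p_indep matching] that by (auto dest: inj_onD)
  have pq_neq: "p k \<noteq> q l" if "k \<in> ?I" "l \<in> ?I" for k l
    using induced_matching_inj(3)[OF p_indep matching] that by blast
  txt \<open>Class \<open>i\<close> takes \<open>p (i, j)\<close> for \<open>j \<ge> i\<close> and \<open>q (j, i)\<close> for \<open>j < i\<close>, so for
    \<open>i < j\<close> the matching edge between \<open>p (i, j)\<close> and \<open>q (i, j)\<close> joins classes \<open>i\<close> and \<open>j\<close>.\<close>
  define C where "C i = p ` {(i, j) | j. i \<le> j \<and> j < t} \<union> q ` {(j, i) | j. j < i}" for i
  have C_cases: "(\<exists>j. i \<le> j \<and> j < t \<and> x = p (i, j)) \<or> (\<exists>j. j < i \<and> x = q (j, i))"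
    if "x \<in> C i" for i x
    using that by (auto simp: C_def)
  have indep: "\<not> adj H x y" if "i < t" "x \<in> C i" "y \<in> C i" for i x y
  proof -
    have pq: "\<not> adj H (p (i, j)) (q (j', i))" if "i \<le> j" "j < t" "j' < i" for j j'
      using matching[of "(i, j)" "(j', i)"] that \<open>i < t\<close> by auto
    from C_cases[OF that(2)] C_cases[OF that(3)] show ?thesis
    proof (elim disjE exE conjE)
      fix j j' assume "x = p (i, j)" "y = p (i, j')" "j < t" "j' < t"
      then show ?thesis using p_indep \<open>i < t\<close> by simp
    next
      fix j j' assume "x = p (i, j)" "y = q (j', i)" "i \<le> j" "j < t" "j' < i"
      then show ?thesis using pq by simp
    next
      fix j j' assume "x = q (j, i)" "y = p (i, j')" "j < i" "i \<le> j'" "j' < t"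
      then show ?thesis using pq[of j' j] adj_commute[of H x y] by simp
    next
      fix j j' assume "x = q (j, i)" "y = q (j', i)" "j < i" "j' < i"
      then show ?thesis using q_indep \<open>i < t\<close> by simp
    qed
  qed
  have disjoint: "C i \<inter> C i' = {}" if "i < t" "i' < t" "i \<noteq> i'" for i i'
  proof (rule equals0I)
    fix z assume "z \<in> C i \<inter> C i'"
    then have "z \<in> C i" "z \<in> C i'" by simp_all
    from C_cases[OF this(1)] C_cases[OF this(2)] show False
    proof (elim disjE exE conjE)
      fix j j' assume "z = p (i, j)" "z = p (i', j')" "j < t" "j' < t"
      then show False using p_inj[of "(i, j)" "(i', j')"] that by simp
    next
      fix j j' assume "z = p (i, j)" "z = q (j', i')" "j < t" "j' < i'"
      then show False using pq_neq[of "(i, j)" "(j', i')"] that by simp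
    next
      fix j j' assume "z = q (j, i)" "z = p (i', j')" "j < i" "j' < t"
      then show False using pq_neq[of "(i', j')" "(j, i)"] that by simp
    next
      fix j j' assume "z = q (j, i)" "z = q (j', i')" "j < i" "j' < i'"
      then show False using q_inj[of "(j, i)" "(j', i')"] that by simp
    qed
  qed
  show ?thesis
  proof (rule complete_graph_projection_of_parts)
    show "independent_partition H {..<t} C"
    proof unfold_locales
      show "C i \<subseteq> verts H" if "i \<in> {..<t}" for i using that verts by (auto simp: C_def)
      show "C i \<noteq> {}" if "i \<in> {..<t}" for i using that by (auto simp: C_def)
    qed (use wf indep disjoint in auto)
    show "\<exists>x\<in>C i. \<exists>y\<in>C j. adj H x y" if "i < j" "j < t" for i j
    proof -
      have "p (i, j) \<in> C i" "q (i, j) \<in> C j" using that by (auto simp: C_def)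
      moreover have "adj H (p (i, j)) (q (i, j))" using matching that by simp
      ultimately show ?thesis by blast
    qed
  qed
qed

lemma complete_graph_projection_of_induced_matching_card:
  assumes wf: "wf_graph H" and J: "finite J" "card J = t * t"
    and verts: "\<And>k. k \<in> J \<Longrightarrow> p k \<in> verts H \<and> q k \<in> verts H"
    and p_indep: "\<And>k l. k \<in> J \<Longrightarrow> l \<in> J \<Longrightarrow> \<not> adj H (p k) (p l)"
    and q_indep: "\<And>k l. k \<in> J \<Longrightarrow> l \<in> J \<Longrightarrow> \<not> adj H (q k) (q l)"
    and matching: "\<And>k l. k \<in> J \<Longrightarrow> l \<in> J \<Longrightarrow> adj H (p k) (q l) \<longleftrightarrow> k = l"
  shows "is_projection (complete_graph t) H"
proof -
  obtain g where g: "bij_betw g ({..<t} \<times> {..<t}) J"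
    using finite_same_card_bij[of "{..<t} \<times> {..<t}" J] J by auto
  have g_in: "g k \<in> J" if "k \<in> {..<t} \<times> {..<t}" for k
    using g that by (auto simp: bij_betw_def)
  have g_inj: "g k = g l \<longleftrightarrow> k = l" if "k \<in> {..<t} \<times> {..<t}" "l \<in> {..<t} \<times> {..<t}" for k l
    using g that by (auto simp: bij_betw_def inj_on_def)
  show ?thesis
    by (rule complete_graph_projection_of_induced_matching[OF wf, where p = "\<lambda>k. p (g k)" and q = "\<lambda>k. q (g k)"])
      (simp_all add: verts p_indep q_indep matching g_in g_inj)
qed

section \<open>Ramsey's theorem for increasing sequences\<close>

lemma ramsey_increasing_subsequence:
  fixes k m r :: nat
  shows "\<exists>N. \<forall>f :: nat set \<Rightarrow> nat. (\<forall>S. f S < k) \<longrightarrow>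
     (\<exists>s c. strict_mono_on {..<m} s \<and> s ` {..<m} \<subseteq> {..<N} \<and>
        (\<forall>S \<subseteq> {..<m}. card S = r \<longrightarrow> f (s ` S) = c))"
proof -
  obtain N :: nat where N: "partn_lst {..<N} (replicate k m) r"
    using ramsey_full by blast
  have "\<exists>s c. strict_mono_on {..<m} s \<and> s ` {..<m} \<subseteq> {..<N} \<and>
      (\<forall>S \<subseteq> {..<m}. card S = r \<longrightarrow> f (s ` S) = c)"
    if f: "\<forall>S. f S < k" for f :: "nat set \<Rightarrow> nat"
  proof -
    have "f \<in> nsets {..<N} r \<rightarrow> {..<k}" using f by simp
    then obtain c M where c: "c < length (replicate k m)"
      and M: "M \<in> nsets {..<N} (replicate k m ! c)" and hom: "f ` nsets M r \<subseteq> {c}"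
      by (rule partn_lstE[OF N _ length_replicate])
    have M': "finite M" "card M = m" "M \<subseteq> {..<N}" using c M by (auto simp: nsets_def)
    obtain s where s: "bij_betw s {..<m} M" "strict_mono_on {..<m} s"
      using ex_bij_betw_strict_mono_card[OF M'(1)] unfolding M'(2) .
    have "f (s ` S) = c" if "S \<subseteq> {..<m}" "card S = r" for S
    proof -
      have "inj_on s S" using s(1) that(1) by (auto simp: bij_betw_def intro: inj_on_subset)
      moreover have "s ` S \<subseteq> M" using s(1) that(1) by (auto simp: bij_betw_def)
      moreover have "finite (s ` S)" using that(1) finite_subset by blast
      ultimately have "s ` S \<in> nsets M r" using that(2) by (simp add: nsets_def card_image)
      then show ?thesis using hom by blast
    qed
    moreover have "s ` {..<m} \<subseteq> {..<N}" using s(1) M'(3) by (simp add: bij_betw_def)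
    ultimately show ?thesis using s(2) by blast
  qed
  then show ?thesis by blast
qed

lemma ramsey_pairs_increasing:
  fixes k m :: nat
  shows "\<exists>N. \<forall>c :: nat \<Rightarrow> nat \<Rightarrow> nat. (\<forall>i j. c i j < k) \<longrightarrow>
     (\<exists>s. strict_mono_on {..<m} s \<and> s ` {..<m} \<subseteq> {..<N} \<and>
        (\<forall>i j. i < j \<longrightarrow> j < m \<longrightarrow> c (s i) (s j) = c (s 0) (s 1)))"
proof -
  obtain N where N: "\<forall>f :: nat set \<Rightarrow> nat. (\<forall>S. f S < k) \<longrightarrow>
     (\<exists>s c. strict_mono_on {..<m} s \<and> s ` {..<m} \<subseteq> {..<N} \<and>
        (\<forall>S \<subseteq> {..<m}. card S = 2 \<longrightarrow> f (s ` S) = c))"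
    using ramsey_increasing_subsequence[of k m 2] by blast
  have "\<exists>s. strict_mono_on {..<m} s \<and> s ` {..<m} \<subseteq> {..<N} \<and>
      (\<forall>i j. i < j \<longrightarrow> j < m \<longrightarrow> c (s i) (s j) = c (s 0) (s 1))"
    if c_lt: "\<forall>i j. c i j < k" for c :: "nat \<Rightarrow> nat \<Rightarrow> nat"
  proof -
    obtain s col where s: "strict_mono_on {..<m} s" "s ` {..<m} \<subseteq> {..<N}"
      and hom: "\<forall>S \<subseteq> {..<m}. card S = 2 \<longrightarrow> c (Min (s ` S)) (Max (s ` S)) = col"
      using N[rule_format, of "\<lambda>S. c (Min S) (Max S)"] c_lt by blast
    have col: "c (s i) (s j) = col" if "i < j" "j < m" for i j
    proof -
      have "s i < s j" using s(1) that by (simp add: strict_mono_onD)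
      then have "Min (s ` {i, j}) = s i" "Max (s ` {i, j}) = s j" by simp_all
      moreover have "{i, j} \<subseteq> {..<m}" "card {i, j} = 2" using that by auto
      ultimately show ?thesis using hom by metis
    qed
    have "c (s i) (s j) = c (s 0) (s 1)" if "i < j" "j < m" for i j
      using col[OF that] col[of 0 1] that by simp
    with s show ?thesis by blast
  qed
  then show ?thesis by blast
qed

lemma ramsey_triples_increasing:
  fixes k m :: nat
  shows "\<exists>N. \<forall>c :: nat \<Rightarrow> nat \<Rightarrow> nat \<Rightarrow> nat. (\<forall>i j l. c i j l < k) \<longrightarrow>
     (\<exists>s. strict_mono_on {..<m} s \<and> s ` {..<m} \<subseteq> {..<N} \<and>
        (\<forall>i j l. i < j \<longrightarrow> j < l \<longrightarrow> l < m \<longrightarrow> c (s i) (s j) (s l) = c (s 0) (s 1) (s 2)))"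
proof -
  obtain N where N: "\<forall>f :: nat set \<Rightarrow> nat. (\<forall>S. f S < k) \<longrightarrow>
     (\<exists>s c. strict_mono_on {..<m} s \<and> s ` {..<m} \<subseteq> {..<N} \<and>
        (\<forall>S \<subseteq> {..<m}. card S = 3 \<longrightarrow> f (s ` S) = c))"
    using ramsey_increasing_subsequence[of k m 3] by blast
  have "\<exists>s. strict_mono_on {..<m} s \<and> s ` {..<m} \<subseteq> {..<N} \<and>
      (\<forall>i j l. i < j \<longrightarrow> j < l \<longrightarrow> l < m \<longrightarrow> c (s i) (s j) (s l) = c (s 0) (s 1) (s 2))"
    if c_lt: "\<forall>i j l. c i j l < k" for c :: "nat \<Rightarrow> nat \<Rightarrow> nat \<Rightarrow> nat"
  proof -
    define mid where "mid S = Min (S - {Min S})" for S :: "nat set"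
    obtain s col where s: "strict_mono_on {..<m} s" "s ` {..<m} \<subseteq> {..<N}"
      and hom: "\<forall>S \<subseteq> {..<m}. card S = 3 \<longrightarrow> c (Min (s ` S)) (mid (s ` S)) (Max (s ` S)) = col"
      using N[rule_format, of "\<lambda>S. c (Min S) (mid S) (Max S)"] c_lt by blast
    have col: "c (s i) (s j) (s l) = col" if "i < j" "j < l" "l < m" for i j l
    proof -
      have "s i < s j" "s j < s l" using s(1) that by (simp_all add: strict_mono_onD)
      then have "Min (s ` {i, j, l}) = s i" "mid (s ` {i, j, l}) = s j" "Max (s ` {i, j, l}) = s l"
        by (auto simp: mid_def insert_Diff_if)
      moreover have "{i, j, l} \<subseteq> {..<m}" "card {i, j, l} = 3" using that by auto
      ultimately show ?thesis using hom by metis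
    qed
    have "c (s i) (s j) (s l) = c (s 0) (s 1) (s 2)" if "i < j" "j < l" "l < m" for i j l
      using col[OF that] col[of 0 1 2] that by simp
    with s show ?thesis by blast
  qed
  then show ?thesis by blast
qed

section \<open>Graphs with many distinct neighbourhoods\<close>

definition independent_seq :: "'a graph \<Rightarrow> nat \<Rightarrow> (nat \<Rightarrow> 'a) \<Rightarrow> bool" where
  "independent_seq H n u \<longleftrightarrow> (\<forall>i<n. u i \<in> verts H) \<and> (\<forall>i<n. \<forall>j<n. \<not> adj H (u i) (u j))"

lemma independent_seq_reindex:
  assumes "independent_seq H n u" "\<And>i. i < m \<Longrightarrow> s i < n"
  shows "independent_seq H m (\<lambda>i. u (s i))"
  using assms by (simp add: independent_seq_def)

lemma independent_seq_mono: "independent_seq H n u \<Longrightarrow> m \<le> n \<Longrightarrow> independent_seq H m u"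
  by (simp add: independent_seq_def)

lemma complete_graph_projection_of_nbhd_chain:
  assumes wf: "wf_graph H" and u: "independent_seq H (Suc t) u"
    and chain: "\<And>i j. i < j \<Longrightarrow> j \<le> t \<Longrightarrow> nbhd H (u i) \<subset> nbhd H (u j)"
  shows "is_projection (complete_graph t) H"
proof -
  have u_verts: "u i \<in> verts H" if "i \<le> t" for i
    using u that by (simp add: independent_seq_def)
  have u_indep: "\<not> adj H (u i) (u j)" if "i \<le> t" "j \<le> t" for i j
    using u that by (simp add: independent_seq_def)
  have "\<exists>z. adj H (u (Suc i)) z \<and> \<not> adj H (u i) z" if "i < t" for i
    using chain[of i "Suc i"] that by (auto simp: nbhd_def)
  then obtain y where y: "\<And>i. i < t \<Longrightarrow> adj H (u (Suc i)) (y i) \<and> \<not> adj H (u i) (y i)"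
    by metis
  have y_adj: "adj H (u j) (y i)" if "i < j" "j \<le> t" for i j
  proof (cases "Suc i = j")
    case True
    then show ?thesis using y that by auto
  next
    case False
    then have "nbhd H (u (Suc i)) \<subseteq> nbhd H (u j)" using chain[of "Suc i" j] that by auto
    then show ?thesis using y[of i] that by (auto simp: nbhd_def)
  qed
  show ?thesis
  proof (rule complete_graph_projection_of_pairs[OF wf, where x = u and y = y])
    show "u i \<in> verts H \<and> y i \<in> verts H" if "i < t" for i
      using u_verts[of i] y[OF that] adj_in_verts(2)[OF wf, of "u (Suc i)" "y i"] that by simp
    show "\<not> adj H (u i) (y i)" if "i < t" for i
      using y[OF that] by simp
    show "u i \<noteq> y j" if "i < t" "j < t" for i j
      using y[OF that(2)] u_indep[of "Suc j" i] that by auto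
    show "adj H (u i) (y j) \<or> adj H (y i) (u j)" if "i < j" "j < t" for i j
      using y_adj[of i j] that adj_commute[of H "y i" "u j"] by simp
  qed
qed

lemma independent_seq_nbhd_chain_or_antichain:
  fixes m :: nat
  shows "\<exists>N. \<forall>(H :: 'a graph) v. independent_seq H N v \<and> inj_on (\<lambda>i. nbhd H (v i)) {..<N} \<longrightarrow>
     (\<exists>u. independent_seq H m u \<and>
        ((\<forall>i j. i < j \<longrightarrow> j < m \<longrightarrow> nbhd H (u i) \<subset> nbhd H (u j)) \<or>
         (\<forall>i j. i < j \<longrightarrow> j < m \<longrightarrow> \<not> nbhd H (u i) \<subseteq> nbhd H (u j))))"
proof -
  obtain N where N: "\<forall>c :: nat \<Rightarrow> nat \<Rightarrow> nat. (\<forall>i j. c i j < 3) \<longrightarrow>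
     (\<exists>s. strict_mono_on {..<m} s \<and> s ` {..<m} \<subseteq> {..<N} \<and>
        (\<forall>i j. i < j \<longrightarrow> j < m \<longrightarrow> c (s i) (s j) = c (s 0) (s 1)))"
    using ramsey_pairs_increasing[of 3 m] by blast
  have "\<exists>u. independent_seq H m u \<and>
        ((\<forall>i j. i < j \<longrightarrow> j < m \<longrightarrow> nbhd H (u i) \<subset> nbhd H (u j)) \<or>
         (\<forall>i j. i < j \<longrightarrow> j < m \<longrightarrow> \<not> nbhd H (u i) \<subseteq> nbhd H (u j)))"
    if v: "independent_seq H N v" and inj: "inj_on (\<lambda>i. nbhd H (v i)) {..<N}"
    for H :: "'a graph" and v
  proof -
    txt \<open>A homogeneous decreasing chain is read backwards.\<close>
    define c where "c i j = (if nbhd H (v i) \<subseteq> nbhd H (v j) then 0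
      else if nbhd H (v j) \<subseteq> nbhd H (v i) then 1 else 2 :: nat)" for i j
    have "\<forall>i j. c i j < 3" by (simp add: c_def)
    then obtain s where s: "strict_mono_on {..<m} s" "s ` {..<m} \<subseteq> {..<N}"
      and hom: "\<forall>i j. i < j \<longrightarrow> j < m \<longrightarrow> c (s i) (s j) = c (s 0) (s 1)"
      using N by blast
    have s_lt: "s i < N" if "i < m" for i using s(2) that by auto
    have distinct: "nbhd H (v (s i)) \<noteq> nbhd H (v (s j))" if "i < j" "j < m" for i j
    proof
      assume "nbhd H (v (s i)) = nbhd H (v (s j))"
      then have "s i = s j" using inj_onD[OF inj] s_lt that by simp
      moreover have "s i < s j" using s(1) that by (simp add: strict_mono_onD)
      ultimately show False by simp
    qed
    have u: "independent_seq H m (\<lambda>i. v (s i))" using v s_lt by (rule independent_seq_reindex)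
    have "c (s 0) (s 1) \<in> {0, 1, 2}" by (simp add: c_def)
    then consider "c (s 0) (s 1) = 0" | "c (s 0) (s 1) = 1" | "c (s 0) (s 1) = 2" by auto
    then show ?thesis
    proof cases
      case 1
      have "nbhd H (v (s i)) \<subset> nbhd H (v (s j))" if "i < j" "j < m" for i j
      proof -
        have "c (s i) (s j) = 0" using hom[rule_format, OF that] 1 by simp
        then show ?thesis using distinct[OF that] by (auto simp: c_def split: if_splits)
      qed
      with u show ?thesis by (intro exI[of _ "\<lambda>i. v (s i)"]) blast
    next
      case 2
      define u' where "u' i = v (s (m - Suc i))" for i
      have "independent_seq H m u'"
        unfolding u'_def using v by (rule independent_seq_reindex) (use s_lt in auto)
      moreover have "nbhd H (u' i) \<subset> nbhd H (u' j)" if "i < j" "j < m" for i j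
      proof -
        have ij: "m - Suc j < m - Suc i" "m - Suc i < m" using that by auto
        then have "c (s (m - Suc j)) (s (m - Suc i)) = 1" using hom[rule_format, OF ij] 2 by simp
        then show ?thesis
          using distinct[OF ij] unfolding u'_def by (auto simp: c_def split: if_splits)
      qed
      ultimately show ?thesis by (intro exI[of _ u']) blast
    next
      case 3
      have "\<not> nbhd H (v (s i)) \<subseteq> nbhd H (v (s j))" if "i < j" "j < m" for i j
      proof -
        have "c (s i) (s j) = 2" using hom[rule_format, OF that] 3 by simp
        then show ?thesis by (auto simp: c_def split: if_splits)
      qed
      with u show ?thesis by (intro exI[of _ "\<lambda>i. v (s i)"]) blast
    qed
  qed
  then show ?thesis by blast
qed

lemma complete_graph_projection_of_large_matching:
  "\<exists>M. \<forall>(H :: 'a graph) p q. wf_graph H \<and> independent_seq H M p \<and> (\<forall>k<M. q k \<in> verts H) \<and>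
     (\<forall>k<M. \<forall>l<M. adj H (p k) (q l) \<longleftrightarrow> k = l) \<longrightarrow> is_projection (complete_graph t) H"
proof -
  obtain M where M: "\<forall>(V :: nat set) E. finite V \<and> M \<le> card V \<longrightarrow>
      (\<exists>R\<subseteq>V. card R = t \<and> clique R E \<or> card R = t * t \<and> indep R E)"
    using ramsey2[of t "t * t"] by blast
  have "is_projection (complete_graph t) H"
    if wf: "wf_graph H" and p: "independent_seq H M p" and q: "\<forall>k<M. q k \<in> verts H"
      and pq: "\<forall>k<M. \<forall>l<M. adj H (p k) (q l) \<longleftrightarrow> k = l" for H :: "'a graph" and p q
  proof -
    define E where "E = {{k, l} | k l. adj H (q k) (q l)}"
    have E_iff: "{k, l} \<in> E \<longleftrightarrow> adj H (q k) (q l)" for k l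
    proof
      assume "{k, l} \<in> E"
      then obtain k' l' where kl: "{k, l} = {k', l'}" "adj H (q k') (q l')" by (auto simp: E_def)
      then consider "k = k'" "l = l'" | "k = l'" "l = k'" by (auto simp: doubleton_eq_iff)
      then show "adj H (q k) (q l)" using kl(2) adj_commute[of H "q k'" "q l'"] by cases simp_all
    next
      assume "adj H (q k) (q l)"
      then show "{k, l} \<in> E" by (auto simp: E_def)
    qed
    obtain R where R: "R \<subseteq> {..<M}" "card R = t \<and> clique R E \<or> card R = t * t \<and> indep R E"
      using M[rule_format, of "{..<M}" E] by auto
    have q_inj: "inj_on q {..<M}"
      by (rule induced_matching_inj(2)) (use p pq in \<open>auto simp: independent_seq_def\<close>)
    from R(2) show ?thesis
    proof (elim disjE conjE)
      assume "card R = t" "clique R E"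
      show ?thesis
      proof (rule complete_graph_projection_of_clique[OF wf])
        show "q ` R \<subseteq> verts H" using R(1) q by auto
        show "card (q ` R) = t"
          using card_image[OF inj_on_subset[OF q_inj R(1)]] \<open>card R = t\<close> by simp
        show "clique (q ` R) (edges H)"
          using \<open>clique R E\<close> by (auto simp: clique_def E_iff adj_def)
      qed
    next
      assume "card R = t * t" "indep R E"
      show ?thesis
      proof (rule complete_graph_projection_of_induced_matching_card[OF wf _ \<open>card R = t * t\<close>])
        show "finite R" using R(1) finite_subset by blast
        show "p k \<in> verts H \<and> q k \<in> verts H" if "k \<in> R" for k
          using p q that R(1) by (auto simp: independent_seq_def)
        show "\<not> adj H (p k) (p l)" if "k \<in> R" "l \<in> R" for k l
          using p that R(1) by (auto simp: independent_seq_def)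
        show "\<not> adj H (q k) (q l)" if "k \<in> R" "l \<in> R" for k l
        proof (cases "k = l")
          case True
          then show ?thesis using adj_irrefl[OF wf] by simp
        next
          case False
          then have "{k, l} \<notin> E" using \<open>indep R E\<close> that by (simp add: indep_def)
          then show ?thesis by (simp add: E_iff)
        qed
        show "adj H (p k) (q l) \<longleftrightarrow> k = l" if "k \<in> R" "l \<in> R" for k l
          using pq that R(1) by auto
      qed
    qed
  qed
  then show ?thesis by (intro exI[of _ M] allI impI) auto
qed

text \<open>\<open>w i j\<close> witnesses that \<open>nbhd H (u i)\<close> is not contained in \<open>nbhd H (u j)\<close>, and for \<open>i < j < l\<close> whether
  \<open>w i j\<close> sees \<open>u l\<close> (\<open>\<alpha>\<close>) and whether \<open>w j l\<close> sees \<open>u i\<close> (\<open>\<gamma>\<close>) does not depend on the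
  triple, as Ramsey's theorem for triples allows to assume.\<close>

locale nbhd_antichain_pattern =
  fixes H :: "'a graph" and u :: "nat \<Rightarrow> 'a" and w :: "nat \<Rightarrow> nat \<Rightarrow> 'a" and m :: nat
    and \<alpha> \<gamma> :: bool
  assumes wf: "wf_graph H"
    and u_seq: "independent_seq H m u"
    and w_adj: "\<And>i j. i < j \<Longrightarrow> j < m \<Longrightarrow> adj H (u i) (w i j)"
    and w_nonadj: "\<And>i j. i < j \<Longrightarrow> j < m \<Longrightarrow> \<not> adj H (u j) (w i j)"
    and pattern_\<alpha>: "\<And>i j l. i < j \<Longrightarrow> j < l \<Longrightarrow> l < m \<Longrightarrow> adj H (w i j) (u l) = \<alpha>"
    and pattern_\<gamma>: "\<And>i j l. i < j \<Longrightarrow> j < l \<Longrightarrow> l < m \<Longrightarrow> adj H (w j l) (u i) = \<gamma>"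
begin

lemma u_verts: "i < m \<Longrightarrow> u i \<in> verts H"
  using u_seq by (simp add: independent_seq_def)

lemma u_indep: "i < m \<Longrightarrow> j < m \<Longrightarrow> \<not> adj H (u i) (u j)"
  using u_seq by (simp add: independent_seq_def)

lemma w_verts: "i < j \<Longrightarrow> j < m \<Longrightarrow> w i j \<in> verts H"
  using adj_in_verts(2)[OF wf w_adj] .

lemma u_neq_w: "i < j \<Longrightarrow> j < m \<Longrightarrow> k < m \<Longrightarrow> u k \<noteq> w i j"
  using w_adj[of i j] u_indep[of i k] by auto

lemma projection_if_\<alpha>_or_\<gamma>:
  assumes "\<alpha> \<or> \<gamma>" and m: "2 * t \<le> m"
  shows "is_projection (complete_graph t) H"
proof (rule complete_graph_projection_of_pairs[OF wf,
      where x = "\<lambda>i. u (2 * i + 1)" and y = "\<lambda>i. w (2 * i) (2 * i + 1)"])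
  show "u (2 * i + 1) \<in> verts H \<and> w (2 * i) (2 * i + 1) \<in> verts H" if "i < t" for i
    using that m u_verts w_verts by simp
  show "\<not> adj H (u (2 * i + 1)) (w (2 * i) (2 * i + 1))" if "i < t" for i
    using that m w_nonadj by simp
  show "u (2 * i + 1) \<noteq> w (2 * j) (2 * j + 1)" if "i < t" "j < t" for i j
    using that m u_neq_w by simp
  show "adj H (u (2 * i + 1)) (w (2 * j) (2 * j + 1)) \<or> adj H (w (2 * i) (2 * i + 1)) (u (2 * j + 1))"
    if "i < j" "j < t" for i j
  proof (cases \<alpha>)
    case True
    then show ?thesis using pattern_\<alpha>[of "2 * i" "2 * i + 1" "2 * j + 1"] that m by simp
  next
    case False
    then have \<gamma> using assms(1) by simp
    then show ?thesis
      using pattern_\<gamma>[of "2 * i + 1" "2 * j" "2 * j + 1"] that m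
        adj_commute[of H "u (2 * i + 1)" "w (2 * j) (2 * j + 1)"] by simp
  qed
qed

lemma adj_u_w_iff_eq:
  assumes "\<not> \<alpha>" "\<not> \<gamma>" and "2 * k + 1 < m" "2 * l + 1 < m"
  shows "adj H (u (2 * k)) (w (2 * l) (2 * l + 1)) \<longleftrightarrow> k = l"
proof -
  consider "k = l" | "k < l" | "l < k" by linarith
  then show ?thesis
  proof cases
    case 1
    then show ?thesis using w_adj assms(4) by simp
  next
    case 2
    then show ?thesis
      using pattern_\<gamma>[of "2 * k" "2 * l" "2 * l + 1"] assms(2,4)
        adj_commute[of H "u (2 * k)" "w (2 * l) (2 * l + 1)"] by simp
  next
    case 3
    then show ?thesis
      using pattern_\<alpha>[of "2 * l" "2 * l + 1" "2 * k"] assms(1,3)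
        adj_commute[of H "u (2 * k)" "w (2 * l) (2 * l + 1)"] by simp
  qed
qed

end

lemma of_bool_pair_eq_iff:
  "2 * of_bool a + of_bool b = (2 * of_bool a' + of_bool b' :: nat) \<longleftrightarrow> a = a' \<and> b = b'"
  by (cases a; cases b; cases a'; cases b') simp_all

lemma nbhd_antichain_pattern_exists:
  fixes m :: nat
  shows "\<exists>N. \<forall>(H :: 'a graph) v. wf_graph H \<and> independent_seq H N v \<and>
     (\<forall>i j. i < j \<longrightarrow> j < N \<longrightarrow> \<not> nbhd H (v i) \<subseteq> nbhd H (v j)) \<longrightarrow>
     (\<exists>u w \<alpha> \<gamma>. nbhd_antichain_pattern H u w m \<alpha> \<gamma>)"
proof -
  obtain N where N: "\<forall>c :: nat \<Rightarrow> nat \<Rightarrow> nat \<Rightarrow> nat. (\<forall>i j l. c i j l < 4) \<longrightarrow>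
     (\<exists>s. strict_mono_on {..<m} s \<and> s ` {..<m} \<subseteq> {..<N} \<and>
        (\<forall>i j l. i < j \<longrightarrow> j < l \<longrightarrow> l < m \<longrightarrow> c (s i) (s j) (s l) = c (s 0) (s 1) (s 2)))"
    using ramsey_triples_increasing[of 4 m] by blast
  have "\<exists>u w \<alpha> \<gamma>. nbhd_antichain_pattern H u w m \<alpha> \<gamma>"
    if wf: "wf_graph H" and v: "independent_seq H N v"
      and antichain: "\<forall>i j. i < j \<longrightarrow> j < N \<longrightarrow> \<not> nbhd H (v i) \<subseteq> nbhd H (v j)"
    for H :: "'a graph" and v
  proof -
    have "\<exists>z. adj H (v i) z \<and> \<not> adj H (v j) z" if "i < j" "j < N" for i j
      using antichain that by (auto simp: nbhd_def)
    then obtain w where w: "\<And>i j. i < j \<Longrightarrow> j < N \<Longrightarrow> adj H (v i) (w i j) \<and> \<not> adj H (v j) (w i j)"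
      by metis
    define c where "c i j l = (2 * of_bool (adj H (w i j) (v l)) + of_bool (adj H (w j l) (v i)) :: nat)"
      for i j l
    have "\<forall>i j l. c i j l < 4" by (simp add: c_def)
    then obtain s where s: "strict_mono_on {..<m} s" "s ` {..<m} \<subseteq> {..<N}"
      and hom: "\<forall>i j l. i < j \<longrightarrow> j < l \<longrightarrow> l < m \<longrightarrow> c (s i) (s j) (s l) = c (s 0) (s 1) (s 2)"
      using N by blast
    have s_lt: "s i < N" if "i < m" for i using s(2) that by auto
    have s_less: "s i < s j" if "i < j" "j < m" for i j using s(1) that by (simp add: strict_mono_onD)
    define \<alpha> where "\<alpha> = adj H (w (s 0) (s 1)) (v (s 2))"
    define \<gamma> where "\<gamma> = adj H (w (s 1) (s 2)) (v (s 0))"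
    have pattern: "adj H (w (s i) (s j)) (v (s l)) = \<alpha> \<and> adj H (w (s j) (s l)) (v (s i)) = \<gamma>"
      if "i < j" "j < l" "l < m" for i j l
      using hom[rule_format, OF that] unfolding c_def \<alpha>_def \<gamma>_def of_bool_pair_eq_iff .
    have "nbhd_antichain_pattern H (\<lambda>i. v (s i)) (\<lambda>i j. w (s i) (s j)) m \<alpha> \<gamma>"
    proof unfold_locales
      show "independent_seq H m (\<lambda>i. v (s i))" using v s_lt by (rule independent_seq_reindex)
      show "adj H (v (s i)) (w (s i) (s j))" if "i < j" "j < m" for i j
        using w[OF s_less[OF that] s_lt[OF that(2)]] by simp
      show "\<not> adj H (v (s j)) (w (s i) (s j))" if "i < j" "j < m" for i j
        using w[OF s_less[OF that] s_lt[OF that(2)]] by simp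
      show "adj H (w (s i) (s j)) (v (s l)) = \<alpha>" if "i < j" "j < l" "l < m" for i j l
        using pattern[OF that] by simp
      show "adj H (w (s j) (s l)) (v (s i)) = \<gamma>" if "i < j" "j < l" "l < m" for i j l
        using pattern[OF that] by simp
    qed (rule wf)
    then show ?thesis by blast
  qed
  then show ?thesis by blast
qed

lemma complete_graph_projection_of_nbhd_antichain:
  "\<exists>n. \<forall>(H :: 'a graph) v. wf_graph H \<and> independent_seq H n v \<and>
     (\<forall>i j. i < j \<longrightarrow> j < n \<longrightarrow> \<not> nbhd H (v i) \<subseteq> nbhd H (v j)) \<longrightarrow>
     is_projection (complete_graph t) H"
proof -
  obtain M where M: "\<forall>(H :: 'a graph) p q. wf_graph H \<and> independent_seq H M p \<and>
      (\<forall>k<M. q k \<in> verts H) \<and> (\<forall>k<M. \<forall>l<M. adj H (p k) (q l) \<longleftrightarrow> k = l) \<longrightarrow>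
      is_projection (complete_graph t) H"
    using complete_graph_projection_of_large_matching[of t] by blast
  define m where "m = 2 * M + 2 * t"
  obtain N where N: "\<forall>(H :: 'a graph) v. wf_graph H \<and> independent_seq H N v \<and>
      (\<forall>i j. i < j \<longrightarrow> j < N \<longrightarrow> \<not> nbhd H (v i) \<subseteq> nbhd H (v j)) \<longrightarrow>
      (\<exists>u w \<alpha> \<gamma>. nbhd_antichain_pattern H u w m \<alpha> \<gamma>)"
    using nbhd_antichain_pattern_exists[of m] by blast
  have "is_projection (complete_graph t) H"
    if wf: "wf_graph H" and v: "independent_seq H N v"
      and antichain: "\<forall>i j. i < j \<longrightarrow> j < N \<longrightarrow> \<not> nbhd H (v i) \<subseteq> nbhd H (v j)"
    for H :: "'a graph" and v
  proof -
    obtain u w \<alpha> \<gamma> where "nbhd_antichain_pattern H u w m \<alpha> \<gamma>" using N wf v antichain by blast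
    then interpret nbhd_antichain_pattern H u w m \<alpha> \<gamma> .
    show ?thesis
    proof (cases "\<alpha> \<or> \<gamma>")
      case True
      then show ?thesis using projection_if_\<alpha>_or_\<gamma> by (simp add: m_def)
    next
      case False
      have "independent_seq H M (\<lambda>k. u (2 * k))"
        using u_seq by (rule independent_seq_reindex) (simp add: m_def)
      moreover have "\<forall>k<M. w (2 * k) (2 * k + 1) \<in> verts H"
        using w_verts by (simp add: m_def)
      moreover have "\<forall>k<M. \<forall>l<M. adj H (u (2 * k)) (w (2 * l) (2 * l + 1)) \<longleftrightarrow> k = l"
        using adj_u_w_iff_eq False by (simp add: m_def)
      ultimately show ?thesis
        using M[rule_format, of H "\<lambda>k. u (2 * k)" "\<lambda>k. w (2 * k) (2 * k + 1)"] wf by blast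
    qed
  qed
  then show ?thesis by blast
qed

lemma complete_graph_projection_of_distinct_nbhds:
  "\<exists>n. \<forall>(H :: 'a graph) v. wf_graph H \<and> independent_seq H n v \<and>
     inj_on (\<lambda>i. nbhd H (v i)) {..<n} \<longrightarrow> is_projection (complete_graph t) H"
proof -
  obtain m where m: "\<forall>(H :: 'a graph) v. wf_graph H \<and> independent_seq H m v \<and>
      (\<forall>i j. i < j \<longrightarrow> j < m \<longrightarrow> \<not> nbhd H (v i) \<subseteq> nbhd H (v j)) \<longrightarrow>
      is_projection (complete_graph t) H"
    using complete_graph_projection_of_nbhd_antichain[of t] by blast
  obtain N where N: "\<forall>(H :: 'a graph) v. independent_seq H N v \<and> inj_on (\<lambda>i. nbhd H (v i)) {..<N} \<longrightarrow>
      (\<exists>u. independent_seq H (m + Suc t) u \<and>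
        ((\<forall>i j. i < j \<longrightarrow> j < m + Suc t \<longrightarrow> nbhd H (u i) \<subset> nbhd H (u j)) \<or>
         (\<forall>i j. i < j \<longrightarrow> j < m + Suc t \<longrightarrow> \<not> nbhd H (u i) \<subseteq> nbhd H (u j))))"
    using independent_seq_nbhd_chain_or_antichain[of "m + Suc t"] by blast
  have "is_projection (complete_graph t) H"
    if wf: "wf_graph H" and v: "independent_seq H N v" and inj: "inj_on (\<lambda>i. nbhd H (v i)) {..<N}"
    for H :: "'a graph" and v
  proof -
    obtain u where u: "independent_seq H (m + Suc t) u"
      and "(\<forall>i j. i < j \<longrightarrow> j < m + Suc t \<longrightarrow> nbhd H (u i) \<subset> nbhd H (u j)) \<or>
         (\<forall>i j. i < j \<longrightarrow> j < m + Suc t \<longrightarrow> \<not> nbhd H (u i) \<subseteq> nbhd H (u j))"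
      using N v inj by blast
    then show ?thesis
    proof (elim disjE)
      assume "\<forall>i j. i < j \<longrightarrow> j < m + Suc t \<longrightarrow> nbhd H (u i) \<subset> nbhd H (u j)"
      then show ?thesis
        by (intro complete_graph_projection_of_nbhd_chain[OF wf independent_seq_mono[OF u]]) auto
    next
      assume "\<forall>i j. i < j \<longrightarrow> j < m + Suc t \<longrightarrow> \<not> nbhd H (u i) \<subseteq> nbhd H (u j)"
      then show ?thesis
        using m[rule_format, of H u] wf independent_seq_mono[OF u, of m] by simp
    qed
  qed
  then show ?thesis by blast
qed

lemma card_nbhds_bounded:
  "\<exists>G. \<forall>H :: 'a graph. wf_graph H \<and> \<not> is_projection (complete_graph t) H \<longrightarrow>
     card (nbhd H ` verts H) < G"
proof -
  obtain n where n: "\<forall>(H :: 'a graph) v. wf_graph H \<and> independent_seq H n v \<and>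
      inj_on (\<lambda>i. nbhd H (v i)) {..<n} \<longrightarrow> is_projection (complete_graph t) H"
    using complete_graph_projection_of_distinct_nbhds[of t] by blast
  obtain r where r: "\<forall>(V :: 'a set) E. finite V \<and> r \<le> card V \<longrightarrow>
      (\<exists>R\<subseteq>V. card R = t \<and> clique R E \<or> card R = n \<and> indep R E)"
    using ramsey2[of t n] by blast
  have "card (nbhd H ` verts H) < r"
    if wf: "wf_graph H" and no_Kt: "\<not> is_projection (complete_graph t) H" for H :: "'a graph"
  proof (rule ccontr)
    assume "\<not> card (nbhd H ` verts H) < r"
    have "\<exists>V\<subseteq>verts H. inj_on (nbhd H) V \<and> nbhd H ` verts H = nbhd H ` V"
      by (rule subset_image_inj[THEN iffD1]) simp
    then obtain V where V: "V \<subseteq> verts H" "inj_on (nbhd H) V" "nbhd H ` verts H = nbhd H ` V"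
      by auto
    have "finite V" using V(1) wf finite_subset by (auto simp: wf_graph_def)
    moreover have "r \<le> card V"
      using \<open>\<not> card (nbhd H ` verts H) < r\<close> V(3) card_image[OF V(2)] by simp
    ultimately obtain R where R: "R \<subseteq> V" "card R = t \<and> clique R (edges H) \<or> card R = n \<and> indep R (edges H)"
      using r by blast
    from R(2) show False
    proof (elim disjE conjE)
      assume "card R = t" "clique R (edges H)"
      then show False
        using complete_graph_projection_of_clique[OF wf] R(1) V(1) no_Kt by blast
    next
      assume "card R = n" "indep R (edges H)"
      have "finite R" using R(1) \<open>finite V\<close> finite_subset by blast
      then obtain e where e: "bij_betw e {..<n} R"
        using ex_bij_betw_nat_finite \<open>card R = n\<close> by (metis atLeast0LessThan)
      have e_in: "e i \<in> R" if "i < n" for i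
        using e that by (auto simp: bij_betw_def)
      have "independent_seq H n e"
        unfolding independent_seq_def
      proof (intro conjI allI impI)
        fix i assume "i < n"
        then show "e i \<in> verts H" using e_in R(1) V(1) by blast
      next
        fix i j assume "i < n" "j < n"
        then show "\<not> adj H (e i) (e j)"
          using \<open>indep R (edges H)\<close> e_in adj_irrefl[OF wf] by (cases "e i = e j") (auto simp: indep_def adj_def)
      qed
      moreover have "inj_on (\<lambda>i. nbhd H (e i)) {..<n}"
        using comp_inj_on[OF bij_betw_imp_inj_on[OF e], of "nbhd H"] inj_on_subset[OF V(2) R(1)]
          bij_betw_imp_surj_on[OF e] by (simp add: comp_def)
      ultimately show False using n wf no_Kt by blast
    qed
  qed
  then show ?thesis by blast
qed

section \<open>Blowing up twin classes\<close>

lemma twin_copies: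
  assumes wf: "wf_graph H" and nbhd_inj: "inj_on (nbhd H) R"
    and big: "\<And>x. x \<in> R \<Longrightarrow> n \<le> card (twins H x)"
  obtains f where "inj_on f (R \<times> {..<n})" "\<And>x k. x \<in> R \<Longrightarrow> k < n \<Longrightarrow> f (x, k) \<in> twins H x"
proof -
  have "\<exists>g. g ` {..<n} \<subseteq> twins H x \<and> inj_on g {..<n}" if "x \<in> R" for x
  proof (rule card_le_inj)
    show "finite (twins H x)" using wf by (simp add: wf_graph_def twins_def)
    show "card {..<n} \<le> card (twins H x)" using big[OF that] by simp
  qed simp
  then obtain copy where copy: "\<And>x. x \<in> R \<Longrightarrow> copy x ` {..<n} \<subseteq> twins H x \<and> inj_on (copy x) {..<n}"
    by metis
  have copy_twin: "copy x k \<in> twins H x" if "x \<in> R" "k < n" for x k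
    using copy[OF that(1)] that(2) by auto
  have "x = x' \<and> k = k'"
    if xk: "x \<in> R" "k < n" "x' \<in> R" "k' < n" "copy x k = copy x' k'" for x k x' k'
  proof -
    have "nbhd H x = nbhd H x'"
      using copy_twin[OF xk(1,2)] copy_twin[OF xk(3,4)] xk(5) by (simp add: twins_def)
    then have "x = x'" using nbhd_inj xk(1,3) by (simp add: inj_on_eq_iff)
    moreover have "inj_on (copy x) {..<n}" using copy[OF xk(1)] by simp
    ultimately show ?thesis using xk(2,4,5) by (simp add: inj_on_eq_iff)
  qed
  then have "inj_on (\<lambda>(x, k). copy x k) (R \<times> {..<n})"
    by (auto simp: inj_on_def)
  with copy_twin show ?thesis by (intro that) auto
qed

lemma complete_tripartite_projection_of_indexed_pairs:
  fixes a b :: "nat \<Rightarrow> 'a"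
  assumes wf: "wf_graph H"
    and big: "\<And>i. i < 3 \<Longrightarrow> 2 * t \<le> card (twins H (a i)) \<and> 2 * t \<le> card (twins H (b i))"
    and nonadj: "\<And>i. i < 3 \<Longrightarrow> \<not> adj H (a i) (b i)"
    and cross: "\<And>i i'. i < i' \<Longrightarrow> i' < 3 \<Longrightarrow>
      adj H (a i) (a i') \<or> adj H (a i) (b i') \<or> adj H (b i) (a i') \<or> adj H (b i) (b i')"
    and inj: "inj_on a {..<3}" "inj_on b {..<3}"
    and nbhd_inj: "inj_on (nbhd H) (a ` {..<3} \<union> b ` {..<3})"
  shows "is_projection (complete_tripartite t) H"
proof -
  define R where "R = a ` {..<3} \<union> b ` {..<3}"
  have big_R: "2 * t \<le> card (twins H x)" if "x \<in> R" for x
    using that big unfolding R_def by auto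
  obtain f where f_inj: "inj_on f (R \<times> {..<2 * t})"
    and f_twin: "\<And>x k. x \<in> R \<Longrightarrow> k < 2 * t \<Longrightarrow> f (x, k) \<in> twins H x"
    using twin_copies[OF wf nbhd_inj[folded R_def] big_R] by blast
  have f_adj: "adj H (f y) (f y') \<longleftrightarrow> adj H (fst y) (fst y')"
    if "y \<in> R \<times> {..<2 * t}" "y' \<in> R \<times> {..<2 * t}" for y y'
  proof -
    obtain x k x' k' where "y = (x, k)" "y' = (x', k')" by fastforce
    with that show ?thesis using adj_twins[OF f_twin[of x k] f_twin[of x' k']] by simp
  qed
  txt \<open>Vertex \<open>(i, j)\<close> of \<open>K\<^sub>t\<^sub>,\<^sub>t\<^sub>,\<^sub>t\<close> becomes twin number \<open>j\<close> of \<open>a i\<close> together with twin number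
    \<open>t + j\<close> of \<open>b i\<close>; the separate ranges keep the classes disjoint even when a vertex
    occurs in two pairs.\<close>
  define S where "S p = {(a (fst p), snd p), (b (fst p), t + snd p)}" for p :: "nat \<times> nat"
  have S_sub: "S p \<subseteq> R \<times> {..<2 * t}" if "p \<in> {..<3} \<times> {..<t}" for p
    using that by (auto simp: S_def R_def)
  have S_disj: "S p \<inter> S q = {}" if "p \<in> {..<3} \<times> {..<t}" "q \<in> {..<3} \<times> {..<t}" "p \<noteq> q" for p q
    using that inj by (auto simp: S_def inj_on_eq_iff prod_eq_iff)
  have same_side: "\<not> adj H (f y) (f y')"
    if "p \<in> {..<3} \<times> {..<t}" "q \<in> {..<3} \<times> {..<t}" "fst p = fst q" "y \<in> S p" "y' \<in> S q" for p q y y'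
  proof -
    have i: "fst p < 3" using that(1) by auto
    have "fst y \<in> {a (fst p), b (fst p)}" "fst y' \<in> {a (fst p), b (fst p)}"
      using that(3-5) by (auto simp: S_def)
    then have "\<not> adj H (fst y) (fst y')"
      using nonadj[OF i] adj_irrefl[OF wf] adj_commute[of H "a (fst p)" "b (fst p)"] by auto
    then show ?thesis using f_adj[of y y'] S_sub[OF that(1)] S_sub[OF that(2)] that(4,5) by auto
  qed
  show ?thesis
  proof (rule complete_tripartite_projection_of_parts[where C = "\<lambda>p. f ` S p"])
    show "independent_partition H ({..<3} \<times> {..<t}) (\<lambda>p. f ` S p)"
    proof unfold_locales
      show "f ` S p \<subseteq> verts H" if "p \<in> {..<3} \<times> {..<t}" for p
      proof
        fix z assume "z \<in> f ` S p"
        then obtain x k where "(x, k) \<in> S p" "z = f (x, k)" by auto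
        moreover have "(x, k) \<in> R \<times> {..<2 * t}" using S_sub[OF that] \<open>(x, k) \<in> S p\<close> by blast
        ultimately show "z \<in> verts H" using f_twin[of x k] by (simp add: twins_def)
      qed
      show "f ` S p \<inter> f ` S q = {}" if "p \<in> {..<3} \<times> {..<t}" "q \<in> {..<3} \<times> {..<t}" "p \<noteq> q" for p q
        using inj_on_image_Int[OF f_inj S_sub[OF that(1)] S_sub[OF that(2)]] S_disj[OF that] by simp
    qed (use wf same_side in \<open>auto simp: S_def\<close>)
    show "\<not> adj H x y"
      if "p \<in> {..<3} \<times> {..<t}" "q \<in> {..<3} \<times> {..<t}" "fst p = fst q" "x \<in> f ` S p" "y \<in> f ` S q"
      for p q x y
      using that same_side by blast
    show "\<exists>x\<in>f ` S p. \<exists>y\<in>f ` S q. adj H x y"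
      if p: "p \<in> {..<3} \<times> {..<t}" and q: "q \<in> {..<3} \<times> {..<t}" and ne: "fst p \<noteq> fst q" for p q
    proof -
      have cross_S: "\<exists>y\<in>S p'. \<exists>y'\<in>S q'. adj H (fst y) (fst y')"
        if "fst p' < fst q'" "fst q' < 3" for p' q'
        using cross[OF that] by (auto simp: S_def)
      have "\<exists>y\<in>S p. \<exists>y'\<in>S q. adj H (fst y) (fst y')"
      proof (cases "fst p < fst q")
        case True
        then show ?thesis using cross_S[of p q] q by auto
      next
        case False
        then have "fst q < fst p" using ne by simp
        then obtain y y' where "y \<in> S q" "y' \<in> S p" "adj H (fst y) (fst y')"
          using cross_S[of q p] p by auto
        then show ?thesis using adj_commute[of H "fst y" "fst y'"] by blast
      qed
      then obtain y y' where "y \<in> S p" "y' \<in> S q" "adj H (fst y) (fst y')" by blast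
      moreover have "adj H (f y) (f y') \<longleftrightarrow> adj H (fst y) (fst y')"
        using \<open>y \<in> S p\<close> \<open>y' \<in> S q\<close> S_sub[OF p] S_sub[OF q] f_adj[of y y'] by auto
      ultimately show ?thesis by blast
    qed
  qed
qed

lemma complete_tripartite_projection_of_three_pairs:
  assumes wf: "wf_graph H"
    and big: "\<And>x. x \<in> {a0, a1, b0, b1, c0, c1} \<Longrightarrow> 2 * t \<le> card (twins H x)"
    and nonadj: "\<not> adj H a0 a1" "\<not> adj H b0 b1" "\<not> adj H c0 c1"
    and ab: "adj H a0 b0 \<or> adj H a0 b1 \<or> adj H a1 b0 \<or> adj H a1 b1"
    and ac: "adj H a0 c0 \<or> adj H a0 c1 \<or> adj H a1 c0 \<or> adj H a1 c1"
    and bc: "adj H b0 c0 \<or> adj H b0 c1 \<or> adj H b1 c0 \<or> adj H b1 c1"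
    and distinct: "distinct [a0, b0, c0]" "distinct [a1, b1, c1]"
    and nbhd_inj: "inj_on (nbhd H) {a0, a1, b0, b1, c0, c1}"
  shows "is_projection (complete_tripartite t) H"
proof (rule complete_tripartite_projection_of_indexed_pairs[OF wf,
      where a = "(!) [a0, b0, c0]" and b = "(!) [a1, b1, c1]"])
  have three: "i = 0 \<or> i = 1 \<or> i = 2" if "i < 3" for i :: nat using that by auto
  show "2 * t \<le> card (twins H ([a0, b0, c0] ! i)) \<and> 2 * t \<le> card (twins H ([a1, b1, c1] ! i))"
    if "i < 3" for i
    using three[OF that] by (elim disjE) (simp_all add: big)
  show "\<not> adj H ([a0, b0, c0] ! i) ([a1, b1, c1] ! i)" if "i < 3" for i
    using three[OF that] by (elim disjE) (simp_all add: nonadj)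
  show "adj H ([a0, b0, c0] ! i) ([a0, b0, c0] ! i') \<or> adj H ([a0, b0, c0] ! i) ([a1, b1, c1] ! i') \<or>
      adj H ([a1, b1, c1] ! i) ([a0, b0, c0] ! i') \<or> adj H ([a1, b1, c1] ! i) ([a1, b1, c1] ! i')"
    if "i < i'" "i' < 3" for i i'
  proof -
    have "i = 0 \<and> i' = 1 \<or> i = 0 \<and> i' = 2 \<or> i = 1 \<and> i' = 2" using that by auto
    then show ?thesis using ab ac bc by (elim disjE conjE) simp_all
  qed
  show "inj_on ((!) [a0, b0, c0]) {..<3}" "inj_on ((!) [a1, b1, c1]) {..<3}"
    using distinct by (auto intro!: inj_on_nth)
  have "{..<3::nat} = {0, 1, 2}" by auto
  then have "(!) [a0, b0, c0] ` {..<3} \<union> (!) [a1, b1, c1] ` {..<3} = {a0, a1, b0, b1, c0, c1}"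
    by auto
  then show "inj_on (nbhd H) ((!) [a0, b0, c0] ` {..<3} \<union> (!) [a1, b1, c1] ` {..<3})"
    using nbhd_inj by simp
qed

lemma complete_tripartite_projection_of_triangle:
  assumes wf: "wf_graph H" and big: "\<And>x. x \<in> {a, b, c} \<Longrightarrow> 2 * t \<le> card (twins H x)"
    and ab: "adj H a b" and bc: "adj H b c" and ac: "adj H a c"
  shows "is_projection (complete_tripartite t) H"
proof -
  have irrefl: "\<not> adj H x x" for x using adj_irrefl[OF wf] .
  have nbhd_ne: "nbhd H a \<noteq> nbhd H b" "nbhd H a \<noteq> nbhd H c" "nbhd H b \<noteq> nbhd H c"
    using nbhd_neqI[OF ab irrefl] nbhd_neqI[OF ac irrefl] nbhd_neqI[OF bc irrefl] by simp_all
  show ?thesis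
  proof (rule complete_tripartite_projection_of_three_pairs[OF wf, of a a b b c c])
    show "inj_on (nbhd H) {a, a, b, b, c, c}"
      using nbhd_ne nbhd_ne[THEN not_sym] by (auto simp: inj_on_def)
  qed (use big ab bc ac irrefl nbhd_ne in auto)
qed

lemma complete_tripartite_projection_of_induced_P4:
  assumes wf: "wf_graph H" and big: "\<And>x. x \<in> {a, b, c, d} \<Longrightarrow> 2 * t \<le> card (twins H x)"
    and ab: "adj H a b" and bc: "adj H b c" and cd: "adj H c d"
    and ac: "\<not> adj H a c" and bd: "\<not> adj H b d" and ad: "\<not> adj H a d"
  shows "is_projection (complete_tripartite t) H"
proof -
  have irrefl: "\<not> adj H x x" for x using adj_irrefl[OF wf] .
  have ba: "adj H b a" and dc: "adj H d c" and da: "\<not> adj H d a" and db: "\<not> adj H d b"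
    using ab cd ad bd adj_commute[of H] by simp_all
  have nbhd_ne: "nbhd H a \<noteq> nbhd H b" "nbhd H c \<noteq> nbhd H a" "nbhd H a \<noteq> nbhd H d"
    "nbhd H b \<noteq> nbhd H c" "nbhd H b \<noteq> nbhd H d" "nbhd H c \<noteq> nbhd H d"
    using nbhd_neqI[OF ab irrefl] nbhd_neqI[OF cd ad] nbhd_neqI[OF ab db]
      nbhd_neqI[OF bc irrefl] nbhd_neqI[OF ba da] nbhd_neqI[OF cd irrefl] by simp_all
  show ?thesis
  proof (rule complete_tripartite_projection_of_three_pairs[OF wf, of a d b b c c])
    show "inj_on (nbhd H) {a, d, b, b, c, c}"
      using nbhd_ne nbhd_ne[THEN not_sym] by (auto simp: inj_on_def)
    show "distinct [a, b, c]" "distinct [d, b, c]"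
      using nbhd_ne by auto
  qed (use big ab bc dc ad irrefl in auto)
qed

lemma complete_tripartite_projection_of_induced_2K2:
  assumes wf: "wf_graph H" and big: "\<And>x. x \<in> {a, b, c, d} \<Longrightarrow> 2 * t \<le> card (twins H x)"
    and ab: "adj H a b" and cd: "adj H c d"
    and ac: "\<not> adj H a c" and ad: "\<not> adj H a d" and bc: "\<not> adj H b c" and bd: "\<not> adj H b d"
  shows "is_projection (complete_tripartite t) H"
proof -
  have irrefl: "\<not> adj H x x" for x using adj_irrefl[OF wf] .
  have ba: "adj H b a" and cb: "\<not> adj H c b" and ca: "\<not> adj H c a"
    and da: "\<not> adj H d a" and db: "\<not> adj H d b"
    using ab bc ac ad bd adj_commute[of H] by simp_all
  have nbhd_ne: "nbhd H a \<noteq> nbhd H b" "nbhd H a \<noteq> nbhd H c" "nbhd H a \<noteq> nbhd H d"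
    "nbhd H b \<noteq> nbhd H c" "nbhd H b \<noteq> nbhd H d" "nbhd H c \<noteq> nbhd H d"
    using nbhd_neqI[OF ab irrefl] nbhd_neqI[OF ab cb] nbhd_neqI[OF ab db]
      nbhd_neqI[OF ba ca] nbhd_neqI[OF ba da] nbhd_neqI[OF cd irrefl] by simp_all
  show ?thesis
  proof (rule complete_tripartite_projection_of_three_pairs[OF wf, of a c c b d d])
    show "inj_on (nbhd H) {a, c, c, b, d, d}"
      using nbhd_ne nbhd_ne[THEN not_sym] by (auto simp: inj_on_def)
    show "distinct [a, c, d]" "distinct [c, b, d]"
      using nbhd_ne by auto
  qed (use big ab cd ac cb irrefl in auto)
qed

section \<open>Extended bicliques\<close>

locale K3_P4_2K2_free =
  fixes G :: "'a graph"
  assumes wf: "wf_graph G"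
    and no_K3: "\<And>a b c. adj G a b \<Longrightarrow> adj G b c \<Longrightarrow> adj G a c \<Longrightarrow> False"
    and no_P4: "\<And>a b c d. adj G a b \<Longrightarrow> adj G b c \<Longrightarrow> adj G c d \<Longrightarrow>
      \<not> adj G a c \<Longrightarrow> \<not> adj G b d \<Longrightarrow> \<not> adj G a d \<Longrightarrow> False"
    and no_2K2: "\<And>a b c d. adj G a b \<Longrightarrow> adj G c d \<Longrightarrow>
      \<not> adj G a c \<Longrightarrow> \<not> adj G a d \<Longrightarrow> \<not> adj G b c \<Longrightarrow> \<not> adj G b d \<Longrightarrow> False"
begin

lemma not_adj_both:
  assumes "adj G a b"
  shows "\<not> (adj G x a \<and> adj G x b)"
  using no_K3[of x a b] assms by blast

lemma adj_one_end:
  assumes ab: "adj G a b" and xy: "adj G x y"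
  shows "adj G x a \<or> adj G x b"
proof (rule ccontr)
  have sym: "adj G u v \<longleftrightarrow> adj G v u" for u v by (rule adj_commute)
  assume x: "\<not> (adj G x a \<or> adj G x b)"
  consider "adj G y a" | "adj G y b" | "\<not> adj G y a" "\<not> adj G y b" by blast
  then show False
  proof cases
    case 1
    then show False using no_P4[of x y a b] xy ab x not_adj_both[OF ab, of y] by blast
  next
    case 2
    then show False using no_P4[of x y b a] xy ab sym[of a b] x not_adj_both[OF ab, of y] by blast
  next
    case 3
    then show False
      using no_2K2[of a b x y] ab xy x sym[of a x] sym[of a y] sym[of b x] sym[of b y] by blast
  qed
qed

lemma edge_sides:
  assumes ab: "adj G a b" and xy: "adj G x y"
  shows "adj G x b \<and> adj G y a \<or> adj G x a \<and> adj G y b"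
proof -
  have yx: "adj G y x" using xy adj_commute by metis
  have "\<not> (adj G x b \<and> adj G y b)" using no_K3[of x y b] xy by blast
  moreover have "\<not> (adj G x a \<and> adj G y a)" using no_K3[of x y a] xy by blast
  ultimately show ?thesis using adj_one_end[OF ab xy] adj_one_end[OF ab yx] by blast
qed

lemma extended_biclique: "extended_biclique G"
proof (cases "edges G = {}")
  case True
  show ?thesis unfolding extended_biclique_def
    by (rule exI[of _ "{}"], rule exI[of _ "{}"], rule exI[of _ "verts G"]) (simp add: True)
next
  case False
  then obtain e where "e \<in> edges G" by blast
  then obtain a b where ab: "adj G a b" by (rule edgesE[OF wf])
  define A where "A = {x \<in> verts G. adj G x b}"
  define B where "B = {x \<in> verts G. adj G x a}"
  have AB_adj: "adj G x y" if "x \<in> A" "y \<in> B" for x y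
  proof (rule ccontr)
    assume "\<not> adj G x y"
    moreover have "adj G x b" "adj G a y" "\<not> adj G x a" "\<not> adj G b y"
      using that not_adj_both[OF ab, of x] not_adj_both[OF ab, of y] adj_commute[of G a y]
        adj_commute[of G b y] by (auto simp: A_def B_def)
    ultimately show False using no_P4[of x b a y] ab adj_commute[of G b a] by blast
  qed
  show ?thesis unfolding extended_biclique_def
  proof (rule exI[of _ A], rule exI[of _ B], rule exI[of _ "verts G - A - B"], intro conjI)
    show "A \<inter> B = {}" using not_adj_both[OF ab] by (auto simp: A_def B_def)
    show "verts G = A \<union> B \<union> (verts G - A - B)" by (auto simp: A_def B_def)
    show "edges G = {{x, y} | x y. x \<in> A \<and> y \<in> B}"
    proof (intro set_eqI iffI)
      fix e assume "e \<in> edges G"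
      then obtain x y where e: "e = {x, y}" "adj G x y" by (rule edgesE[OF wf])
      then have "x \<in> verts G" "y \<in> verts G" using adj_in_verts[OF wf] by blast+
      with edge_sides[OF ab e(2)] have "x \<in> A \<and> y \<in> B \<or> y \<in> A \<and> x \<in> B"
        by (auto simp: A_def B_def)
      with e(1) show "e \<in> {{x, y} | x y. x \<in> A \<and> y \<in> B}" by (auto simp: insert_commute)
    next
      fix e assume "e \<in> {{x, y} | x y. x \<in> A \<and> y \<in> B}"
      then obtain x y where "e = {x, y}" "x \<in> A" "y \<in> B" by blast
      with AB_adj show "e \<in> edges G" by (simp add: adj_def)
    qed
  qed auto
qed

end

lemma card_small_twin_classes:
  assumes wf: "wf_graph H"
  shows "card {x \<in> verts H. card (twins H x) < k} \<le> card (nbhd H ` verts H) * k"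
proof -
  define X where "X = {x \<in> verts H. card (twins H x) < k}"
  have fin_V: "finite (verts H)" using wf by (simp add: wf_graph_def)
  then have fin: "finite X" "finite (\<Union> (twins H ` X))"
    by (auto simp: X_def twins_def)
  have "X \<subseteq> \<Union> (twins H ` X)" by (auto simp: X_def twins_def)
  then have "card X \<le> card (\<Union> (twins H ` X))" by (rule card_mono[OF fin(2)])
  also have "\<dots> \<le> (\<Sum>T \<in> twins H ` X. card T)" by (rule card_Union_le_sum_card)
  also have "\<dots> \<le> card (twins H ` X) * k"
  proof -
    have "card T \<le> k" if "T \<in> twins H ` X" for T using that by (auto simp: X_def)
    then show ?thesis using sum_bounded_above[of "twins H ` X" card k] by simp
  qed
  also have "\<dots> \<le> card (nbhd H ` verts H) * k"
  proof -
    have "twins H ` X = (\<lambda>N. {y \<in> verts H. nbhd H y = N}) ` nbhd H ` X"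
      by (simp add: image_image twins_def)
    then have "card (twins H ` X) \<le> card (nbhd H ` X)"
      by (simp add: card_image_le fin(1))
    also have "\<dots> \<le> card (nbhd H ` verts H)"
      using fin_V by (intro card_mono) (auto simp: X_def)
    finally show ?thesis by simp
  qed
  finally show ?thesis unfolding X_def .
qed

lemma extended_biclique_delete_small_twin_classes:
  assumes wf: "wf_graph H" and no_Kttt: "\<not> is_projection (complete_tripartite t) H"
  shows "extended_biclique (delete_set H {x \<in> verts H. card (twins H x) < 2 * t})"
proof -
  define X where "X = {x \<in> verts H. card (twins H x) < 2 * t}"
  let ?G = "delete_set H X"
  have big: "x \<notin> X \<and> 2 * t \<le> card (twins H x)" if "adj ?G x y" for x y
    using that adj_in_verts(1)[OF wf, of x y] by (auto simp: adj_delete_set X_def)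
  have big': "y \<notin> X \<and> 2 * t \<le> card (twins H y)" if "adj ?G x y" for x y
    using big[of y x] that adj_commute[of ?G x y] by simp
  have lift: "adj ?G x y \<longleftrightarrow> adj H x y" if "x \<notin> X" "y \<notin> X" for x y
    using that by (simp add: adj_delete_set)
  have "K3_P4_2K2_free ?G"
  proof unfold_locales
    show "wf_graph ?G" using wf by (rule wf_graph_delete_set)
  next
    fix a b c assume abc: "adj ?G a b" "adj ?G b c" "adj ?G a c"
    then show False
      using complete_tripartite_projection_of_triangle[OF wf, of a b c t] no_Kttt
        big[OF abc(1)] big[OF abc(2)] big'[OF abc(2)] lift by auto
  next
    fix a b c d
    assume adj: "adj ?G a b" "adj ?G b c" "adj ?G c d"
      and nonadj: "\<not> adj ?G a c" "\<not> adj ?G b d" "\<not> adj ?G a d"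
    then show False
      using complete_tripartite_projection_of_induced_P4[OF wf, of a b c d t] no_Kttt
        big[OF adj(1)] big[OF adj(2)] big[OF adj(3)] big'[OF adj(3)] lift by auto
  next
    fix a b c d
    assume adj: "adj ?G a b" "adj ?G c d"
      and nonadj: "\<not> adj ?G a c" "\<not> adj ?G a d" "\<not> adj ?G b c" "\<not> adj ?G b d"
    then show False
      using complete_tripartite_projection_of_induced_2K2[OF wf, of a b c d t] no_Kttt
        big[OF adj(1)] big'[OF adj(1)] big[OF adj(2)] big'[OF adj(2)] lift by auto
  qed
  then show ?thesis unfolding X_def by (rule K3_P4_2K2_free.extended_biclique)
qed

theorem theorem1p15:
  shows "\<exists>f :: nat \<Rightarrow> nat. \<forall>(H :: nat graph) t. wf_graph H \<and> t \<ge> 1 \<longrightarrow>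
     is_projection (complete_graph t) H \<or>
     is_projection (complete_tripartite t) H \<or>
     (\<exists>X \<subseteq> verts H. card X \<le> f t \<and> extended_biclique (delete_set H X))"
proof -
  have "\<forall>t. \<exists>G. \<forall>H :: nat graph. wf_graph H \<and> \<not> is_projection (complete_graph t) H \<longrightarrow>
      card (nbhd H ` verts H) < G"
    using card_nbhds_bounded by blast
  then obtain G where G: "\<And>t (H :: nat graph). wf_graph H \<Longrightarrow> \<not> is_projection (complete_graph t) H \<Longrightarrow>
      card (nbhd H ` verts H) < G t"
    by metis
  have "\<exists>X \<subseteq> verts H. card X \<le> G t * (2 * t) \<and> extended_biclique (delete_set H X)"
    if wf: "wf_graph H" and no_Kt: "\<not> is_projection (complete_graph t) H"
      and no_Kttt: "\<not> is_projection (complete_tripartite t) H" for H :: "nat graph" and t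
  proof -
    define X where "X = {x \<in> verts H. card (twins H x) < 2 * t}"
    have "card X \<le> card (nbhd H ` verts H) * (2 * t)"
      unfolding X_def by (rule card_small_twin_classes[OF wf])
    also have "\<dots> \<le> G t * (2 * t)"
      using G[OF wf no_Kt] by simp
    finally have "card X \<le> G t * (2 * t)" .
    moreover have "extended_biclique (delete_set H X)"
      unfolding X_def by (rule extended_biclique_delete_small_twin_classes[OF wf no_Kttt])
    moreover have "X \<subseteq> verts H" by (auto simp: X_def)
    ultimately show ?thesis by blast
  qed
  then show ?thesis by (intro exI[of _ "\<lambda>t. G t * (2 * t)"]) blast
qed

end
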